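(* Let $H_1,H_2,K$ be Hilbert spaces, $H:=H_1\otimes H_2$, $\mathcal H:=K\otimes H$, and $\{e_i\}_{i\in I}$ an orthonormal basis of $K$. Let $w\in\mathcal H\setminus\{0\}$, $T:=\theta_{w,w}$, and write $w=\sum_{i\in I}e_i\otimes u_i$ with $u_i\in H$. Let $\widetilde{\mathcal H}$ be a Hilbert space and $A\in\mathcal B_2(\widetilde{\mathcal H},H_1)$, $B\in\mathcal B_2(\widetilde{\mathcal H}^\#,H_2)$ nonzero. Set $\rho:=\sum_{i\in I}\langle\mathrm{vec}(BA^\#),u_i\rangle_H\,e_i$. Then $\rho\in K$ with $\|\rho\|\le\|A\|_2\|B\|_2\sqrt{\|T\|_2}$, and for $\star=\star(T)$, \[ AA^*\star BB^*\;\succcurlyeq\;\frac{1}{\min(\operatorname{rk}AA^*,\operatorname{rk}BB^*,\mathbf r(\star))}\,\theta_{\rho,\rho}\;\succcurlyeq\;0, \] with the convention $1/\infty:=0$, where $\mathcal U(\star):=\overline{\operatorname{span}}^{\mathcal B_2}\{\mathrm{vec}^{-1}(u_i):i\in I\}\subset\mathcal B_2(H_1^\#,H_2)$ and $\mathbf r(\star):=\sup\{\operatorname{rk}X:X\in\mathcal U(\star)\}$. Moreover, the scalar $1/\min(\operatorname{rk}AA^*,\operatorname{rk}BB^*,\mathbf r(\star))$ is the best possible universal constant, i.e., it cannot be improved uniformly over all $A,B$.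
   Context: Hilbert spaces are complex, inner products linear in the first variable. $\mathcal B_2$ denotes Hilbert–Schmidt operators (norm $\|\cdot\|_2$, inner product $\operatorname{Tr}(XY^* )$). $\theta_{x,y}w:=\langle w,y\rangle x$. Conjugate space $H^\#$: same additive group as $H$, scalar multiplication $\lambda\ast y=\bar\lambda y$, inner product $\langle x,y\rangle_{H^\#}=\langle y,x\rangle_H$; $\mathcal C_H:H\to H^\#$, $y\mapsto\bar y$, is the identity on the underlying set. For $Q\in\mathcal B(K,H)$, $Q^\#:=\mathcal C_KQ^*\mathcal C_H^{-1}:H^\#\to K^\#$. $\mathrm{vec}:\mathcal B_2(H_1^\#,H_2)\to H_1\otimes H_2$ is the isometric isomorphism with $\mathrm{vec}(\theta_{y,\bar x})=x\otimes y$. $\operatorname{rk}$ = dimension of closure of range. Slices: $T_{u,v}\in\mathcal B(H)$ defined by $\langle T_{u,v}\eta,\xi\rangle_H=\langle T(v\otimes\eta),u\otimes\xi\rangle_{\mathcal H}$; $T_{ij}:=T_{e_i,e_j}$. The product $\star=\star(T)$ sends $P\in\mathcal B_2(H_1)$, $Q\in\mathcal B_2(H_2)$ to the operator on $K$ with matrix entries $\langle (P\star Q)e_j,e_i\rangle_K=\operatorname{Tr}((P\otimes Q)T_{ij}^* )$. $X\succcurlyeq Y$ means $X-Y$ is a positive operator. *)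

theory Defs
  imports "HOL-Analysis.Analysis" "HOL-Library.Extended_Nat"
begin

text \<open>Concrete model: every complex Hilbert space is unitarily equivalent to l2 over an
index set; we model the Hilbert spaces as l2 over (arbitrary) types. Bounded / Hilbert-Schmidt
operators are represented by their kernels (matrices w.r.t. the standard bases).\<close>

definition l2 :: "('a \<Rightarrow> complex) set" where
  "l2 = {f. (\<lambda>x. (cmod (f x))^2) summable_on UNIV}"

definition linner :: "('a \<Rightarrow> complex) \<Rightarrow> ('a \<Rightarrow> complex) \<Rightarrow> complex" where
  "linner f g = infsum (\<lambda>x. f x * cnj (g x)) UNIV"

definition lnorm :: "('a \<Rightarrow> complex) \<Rightarrow> real" where
  "lnorm f = sqrt (infsum (\<lambda>x. (cmod (f x))^2) UNIV)"

definition onb :: "('i \<Rightarrow> ('k \<Rightarrow> complex)) \<Rightarrow> bool" where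
  "onb e \<longleftrightarrow> (\<forall>i. e i \<in> l2) \<and> (\<forall>i j. linner (e i) (e j) = (if i = j then 1 else 0))
     \<and> (\<forall>v\<in>l2. (\<forall>i. linner v (e i) = 0) \<longrightarrow> v = (\<lambda>_. 0))"

text \<open>Kernels: X p q is the matrix entry; the operator maps l2('q) to l2('p).\<close>
definition kapply :: "('p \<Rightarrow> 'q \<Rightarrow> complex) \<Rightarrow> ('q \<Rightarrow> complex) \<Rightarrow> ('p \<Rightarrow> complex)" where
  "kapply X v = (\<lambda>p. infsum (\<lambda>q. X p q * v q) UNIV)"

definition hs :: "('p \<Rightarrow> 'q \<Rightarrow> complex) \<Rightarrow> bool" where
  "hs X \<longleftrightarrow> (\<lambda>(p, q). (cmod (X p q))^2) summable_on UNIV"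

definition hs_norm :: "('p \<Rightarrow> 'q \<Rightarrow> complex) \<Rightarrow> real" where
  "hs_norm X = sqrt (infsum (\<lambda>(p, q). (cmod (X p q))^2) UNIV)"

definition hs_inner :: "('p \<Rightarrow> 'q \<Rightarrow> complex) \<Rightarrow> ('p \<Rightarrow> 'q \<Rightarrow> complex) \<Rightarrow> complex" where
  "hs_inner X Y = infsum (\<lambda>(p, q). X p q * cnj (Y p q)) UNIV"

definition kadj :: "('p \<Rightarrow> 'q \<Rightarrow> complex) \<Rightarrow> ('q \<Rightarrow> 'p \<Rightarrow> complex)" where
  "kadj X = (\<lambda>q p. cnj (X p q))"

definition kcomp :: "('p \<Rightarrow> 'r \<Rightarrow> complex) \<Rightarrow> ('r \<Rightarrow> 'q \<Rightarrow> complex) \<Rightarrow> ('p \<Rightarrow> 'q \<Rightarrow> complex)" where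
  "kcomp X Y = (\<lambda>p q. infsum (\<lambda>r. X p r * Y r q) UNIV)"

text \<open>Conjugate spaces: l2('c)^# is identified with l2('c) via the unitary f \<mapsto> cnj \<circ> f.
Under these identifications Q^# = C Q^* C^{-1} has kernel the transpose of the kernel of Q.\<close>
definition ksharp :: "('p \<Rightarrow> 'q \<Rightarrow> complex) \<Rightarrow> ('q \<Rightarrow> 'p \<Rightarrow> complex)" where
  "ksharp X = (\<lambda>q p. X p q)"

text \<open>vec : B_2(H1^#, H2) \<rightarrow> H1 \<otimes> H2 with vec(theta_{y, conj x}) = x \<otimes> y.\<close>
definition kvec :: "('b \<Rightarrow> 'a \<Rightarrow> complex) \<Rightarrow> ('a \<times> 'b \<Rightarrow> complex)" where
  "kvec X = (\<lambda>(a, b). X b a)"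

definition kunvec :: "('a \<times> 'b \<Rightarrow> complex) \<Rightarrow> ('b \<Rightarrow> 'a \<Rightarrow> complex)" where
  "kunvec z = (\<lambda>b a. z (a, b))"

text \<open>theta_{x,y} v = <v,y> x.\<close>
definition theta :: "('p \<Rightarrow> complex) \<Rightarrow> ('p \<Rightarrow> complex) \<Rightarrow> ('p \<Rightarrow> 'p \<Rightarrow> complex)" where
  "theta x y = (\<lambda>p q. x p * cnj (y q))"

definition ktensor :: "('a \<Rightarrow> 'a \<Rightarrow> complex) \<Rightarrow> ('b \<Rightarrow> 'b \<Rightarrow> complex)
    \<Rightarrow> ('a \<times> 'b \<Rightarrow> 'a \<times> 'b \<Rightarrow> complex)" where
  "ktensor P Q = (\<lambda>(a, b) (a', b'). P a a' * Q b b')"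

text \<open>The vectors u_i in H with w = \<Sum>_i e_i \<otimes> u_i.\<close>
definition coeff_vec :: "('i \<Rightarrow> ('k \<Rightarrow> complex)) \<Rightarrow> ('k \<times> 'h \<Rightarrow> complex) \<Rightarrow> 'i \<Rightarrow> ('h \<Rightarrow> complex)" where
  "coeff_vec e w i = (\<lambda>h. infsum (\<lambda>k. cnj (e i k) * w (k, h)) UNIV)"

text \<open>Slice T_{u,v}: <T_{u,v} eta, xi> = <T (v \<otimes> eta), u \<otimes> xi>.\<close>
definition slice :: "('k \<times> 'h \<Rightarrow> 'k \<times> 'h \<Rightarrow> complex) \<Rightarrow> ('k \<Rightarrow> complex) \<Rightarrow> ('k \<Rightarrow> complex)
    \<Rightarrow> ('h \<Rightarrow> 'h \<Rightarrow> complex)" where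
  "slice T u v = (\<lambda>h h'. infsum (\<lambda>k. infsum (\<lambda>k'. cnj (u k) * T (k, h) (k', h') * v k') UNIV) UNIV)"

text \<open>Matrix of P \<star> Q w.r.t. the basis e: entry (i,j) is <(P \<star> Q) e_j, e_i> = Tr((P\<otimes>Q) T_ij^*).\<close>
definition star :: "('k \<times> ('a \<times> 'b) \<Rightarrow> 'k \<times> ('a \<times> 'b) \<Rightarrow> complex) \<Rightarrow> ('i \<Rightarrow> ('k \<Rightarrow> complex))
    \<Rightarrow> ('a \<Rightarrow> 'a \<Rightarrow> complex) \<Rightarrow> ('b \<Rightarrow> 'b \<Rightarrow> complex) \<Rightarrow> ('i \<Rightarrow> 'i \<Rightarrow> complex)" where
  "star T e P Q = (\<lambda>i j. hs_inner (ktensor P Q) (slice T (e i) (e j)))"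

text \<open>Coefficients rho_i = <vec(B A^#), u_i> of rho = \<Sum>_i rho_i e_i.\<close>
definition rho :: "('i \<Rightarrow> ('k \<Rightarrow> complex)) \<Rightarrow> ('k \<times> ('a \<times> 'b) \<Rightarrow> complex)
    \<Rightarrow> ('a \<Rightarrow> 'c \<Rightarrow> complex) \<Rightarrow> ('b \<Rightarrow> 'c \<Rightarrow> complex) \<Rightarrow> 'i \<Rightarrow> complex" where
  "rho e w A B = (\<lambda>i. linner (kvec (kcomp B (ksharp A))) (coeff_vec e w i))"

text \<open>Matrix of theta_{rho,rho} w.r.t. e, given the coordinates r_i = <rho, e_i>.\<close>
definition theta_coord :: "('i \<Rightarrow> complex) \<Rightarrow> ('i \<Rightarrow> 'i \<Rightarrow> complex)" where
  "theta_coord r = (\<lambda>i j. r i * cnj (r j))"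

definition qform :: "('i \<Rightarrow> 'i \<Rightarrow> complex) \<Rightarrow> 'i set \<Rightarrow> ('i \<Rightarrow> complex) \<Rightarrow> complex" where
  "qform M F c = (\<Sum>i\<in>F. \<Sum>j\<in>F. cnj (c i) * M i j * c j)"

text \<open>The matrix defines a bounded operator on K.\<close>
definition bounded_form :: "('i \<Rightarrow> 'i \<Rightarrow> complex) \<Rightarrow> bool" where
  "bounded_form M \<longleftrightarrow> (\<exists>C. \<forall>F c d. finite F \<longrightarrow>
     cmod (\<Sum>i\<in>F. \<Sum>j\<in>F. cnj (d i) * M i j * c j)
       \<le> C * sqrt (\<Sum>i\<in>F. (cmod (c i))^2) * sqrt (\<Sum>i\<in>F. (cmod (d i))^2))"

text \<open>X \<succeq> Y : X - Y is positive (tested on the dense span of the basis).\<close>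
definition opge :: "('i \<Rightarrow> 'i \<Rightarrow> complex) \<Rightarrow> ('i \<Rightarrow> 'i \<Rightarrow> complex) \<Rightarrow> bool" where
  "opge M N \<longleftrightarrow> (\<forall>F c. finite F \<longrightarrow>
     Im (qform (\<lambda>i j. M i j - N i j) F c) = 0 \<and> Re (qform (\<lambda>i j. M i j - N i j) F c) \<ge> 0)"

definition lin_indep_fun :: "('p \<Rightarrow> complex) set \<Rightarrow> bool" where
  "lin_indep_fun S \<longleftrightarrow> (\<forall>c. (\<lambda>p. \<Sum>s\<in>S. c s * s p) = (\<lambda>_. 0) \<longrightarrow> (\<forall>s\<in>S. c s = 0))"

definition krank :: "('p \<Rightarrow> 'q \<Rightarrow> complex) \<Rightarrow> enat" where
  "krank X = Sup {enat (card S) | S. finite S \<and> S \<subseteq> kapply X ` l2 \<and> lin_indep_fun S}"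

text \<open>U(\<star>), as a subset of H1 \<otimes> H2 via vec: closed span of the u_i.\<close>
definition Uspace :: "('i \<Rightarrow> ('k \<Rightarrow> complex)) \<Rightarrow> ('k \<times> ('a \<times> 'b) \<Rightarrow> complex) \<Rightarrow> ('a \<times> 'b \<Rightarrow> complex) set" where
  "Uspace e w = {z \<in> l2. \<forall>\<epsilon>>0. \<exists>F c. finite F \<and>
      lnorm (\<lambda>h. z h - (\<Sum>i\<in>F. c i * coeff_vec e w i h)) < \<epsilon>}"

definition rstar :: "('i \<Rightarrow> ('k \<Rightarrow> complex)) \<Rightarrow> ('k \<times> ('a \<times> 'b) \<Rightarrow> complex) \<Rightarrow> enat" where
  "rstar e w = Sup ((\<lambda>z. krank (kunvec z)) ` Uspace e w)"

definition inv_enat :: "enat \<Rightarrow> real" where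
  "inv_enat n = (case n of enat m \<Rightarrow> 1 / real m | \<infinity> \<Rightarrow> 0)"

definition bound_const :: "('i \<Rightarrow> ('k \<Rightarrow> complex)) \<Rightarrow> ('k \<times> ('a \<times> 'b) \<Rightarrow> complex)
    \<Rightarrow> ('a \<Rightarrow> 'c \<Rightarrow> complex) \<Rightarrow> ('b \<Rightarrow> 'c \<Rightarrow> complex) \<Rightarrow> real" where
  "bound_const e w A B = inv_enat (min (krank (kcomp A (kadj A)))
      (min (krank (kcomp B (kadj B))) (rstar e w)))"

definition star_ineq :: "('i \<Rightarrow> ('k \<Rightarrow> complex)) \<Rightarrow> ('k \<times> ('a \<times> 'b) \<Rightarrow> complex)
    \<Rightarrow> ('a \<Rightarrow> 'c \<Rightarrow> complex) \<Rightarrow> ('b \<Rightarrow> 'c \<Rightarrow> complex) \<Rightarrow> real \<Rightarrow> bool" where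
  "star_ineq e w A B c \<longleftrightarrow> opge (star (theta w w) e (kcomp A (kadj A)) (kcomp B (kadj B)))
      (\<lambda>i j. complex_of_real c * theta_coord (rho e w A B) i j)"

end

theory Submission
  imports Defs
begin

text \<open>Write \<open>u\<^sub>i\<close> for the components of \<open>w\<close> and \<open>W = A\<^sup>* \<otimes> B\<^sup>*\<close>. In the basis \<open>e\<close>
  the matrix of \<open>AA\<^sup>* \<star> BB\<^sup>*\<close> is the Gram matrix of the vectors \<open>W u\<^sub>i\<close>, and
  \<open>\<langle>U, vec(BA\<^sup>#)\<rangle>\<close> is the trace of the kernel \<open>W U\<close>. So for \<open>U = \<Sum> c\<^sub>j u\<^sub>j\<close> the two
  quadratic forms to be compared are \<open>\<parallel>W U\<parallel>\<^sup>2\<close> and \<open>|tr W U|\<^sup>2\<close>. A Hilbert-Schmidt kernel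
  whose rows (or columns) lie in an \<open>m\<close>-dimensional space has \<open>|tr X|\<^sup>2 \<le> m \<parallel>X\<parallel>\<^sub>2\<^sup>2\<close>, by
  Cauchy-Schwarz in an orthonormal basis of that space, and each of \<open>rk AA\<^sup>*\<close>, \<open>rk BB\<^sup>*\<close>,
  \<open>r(\<star>)\<close> bounds this \<open>m\<close> for \<open>X = W U\<close>. The bound on \<open>\<rho>\<close> is Bessel's inequality for the
  \<open>u\<^sub>i\<close>, whose synthesis map has norm at most \<open>\<parallel>w\<parallel>\<close>. Rank-one \<open>A\<close>, \<open>B\<close> concentrated
  at a point where some \<open>u\<^sub>i\<close> does not vanish give equality with constant \<open>1\<close>.\<close>

lemma summable_on_sum:
  fixes f :: "'s \<Rightarrow> 'x \<Rightarrow> 'b::topological_comm_monoid_add"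
  assumes "finite S" "\<And>s. s \<in> S \<Longrightarrow> f s summable_on A"
  shows "(\<lambda>x. \<Sum>s\<in>S. f s x) summable_on A"
  using assms by (induction S rule: finite_induct) (auto intro: summable_on_add)

lemma infsum_sum:
  fixes f :: "'s \<Rightarrow> 'x \<Rightarrow> 'b::{topological_comm_monoid_add, t2_space}"
  assumes "finite S" "\<And>s. s \<in> S \<Longrightarrow> f s summable_on A"
  shows "(\<Sum>\<^sub>\<infinity>x\<in>A. \<Sum>s\<in>S. f s x) = (\<Sum>s\<in>S. infsum (f s) A)"
  using assms by (induction S rule: finite_induct) (auto simp: infsum_add summable_on_sum)

lemma infsum_diff:
  fixes f g :: "'x \<Rightarrow> 'b::{topological_ab_group_add, t2_space}"
  assumes "f summable_on A" "g summable_on A"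
  shows "(\<Sum>\<^sub>\<infinity>x\<in>A. f x - g x) = infsum f A - infsum g A"
  using infsum_add[OF assms(1) summable_on_uminus[THEN iffD2, OF assms(2)]]
  by (simp add: infsum_uminus)

lemma
  fixes h :: "'a \<times> 'b \<Rightarrow> 'c::{banach, uniform_topological_group_add}"
  assumes "h summable_on UNIV"
  shows infsum_pair_iterated: "infsum h UNIV = (\<Sum>\<^sub>\<infinity>x. \<Sum>\<^sub>\<infinity>y. h (x, y))"
      "infsum h UNIV = (\<Sum>\<^sub>\<infinity>y. \<Sum>\<^sub>\<infinity>x. h (x, y))"
    and summable_on_pair_iterated: "(\<lambda>x. \<Sum>\<^sub>\<infinity>y. h (x, y)) summable_on UNIV"
      "(\<lambda>y. \<Sum>\<^sub>\<infinity>x. h (x, y)) summable_on UNIV"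
      "(\<lambda>y. h (x, y)) summable_on UNIV" "(\<lambda>x. h (x, y)) summable_on UNIV"
proof -
  have h: "(\<lambda>(x, y). h (x, y)) summable_on UNIV \<times> UNIV" using assms by simp
  have h': "(\<lambda>(y, x). h (x, y)) summable_on UNIV \<times> UNIV"
    using assms summable_on_swap[of h UNIV UNIV] by simp
  show "infsum h UNIV = (\<Sum>\<^sub>\<infinity>x. \<Sum>\<^sub>\<infinity>y. h (x, y))"
    using infsum_Sigma'_banach[OF h] by simp
  then show "infsum h UNIV = (\<Sum>\<^sub>\<infinity>y. \<Sum>\<^sub>\<infinity>x. h (x, y))"
    using infsum_swap_banach[of "\<lambda>x y. h (x, y)" UNIV UNIV] h by simp
  show "(\<lambda>x. \<Sum>\<^sub>\<infinity>y. h (x, y)) summable_on UNIV" using summable_on_Sigma_banach[OF h] by simp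
  show "(\<lambda>y. \<Sum>\<^sub>\<infinity>x. h (x, y)) summable_on UNIV" using summable_on_Sigma_banach[OF h'] by simp
  show "(\<lambda>y. h (x, y)) summable_on UNIV"
    using summable_on_SigmaD1[of "\<lambda>x y. h (x, y)", OF h] by simp
  show "(\<lambda>x. h (x, y)) summable_on UNIV"
    using summable_on_SigmaD1[of "\<lambda>y x. h (x, y)", OF h'] by simp
qed

lemma has_sum_product:
  fixes f :: "'a \<Rightarrow> 'c::{real_normed_field, banach}" and g :: "'b \<Rightarrow> 'c"
  assumes f: "(\<lambda>x. norm (f x)) summable_on UNIV" and g: "(\<lambda>y. norm (g y)) summable_on UNIV"
  shows "((\<lambda>(x, y). f x * g y) has_sum (infsum f UNIV * infsum g UNIV)) UNIV"
proof -
  have "(\<lambda>(x, y). norm (f x * g y)) summable_on UNIV \<times> UNIV"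
  proof (rule summable_on_SigmaI)
    show "((\<lambda>y. case (x, y) of (x, y) \<Rightarrow> norm (f x * g y))
        has_sum norm (f x) * infsum (\<lambda>y. norm (g y)) UNIV) UNIV" for x
      using has_sum_cmult_right[OF has_sum_infsum[OF g], of "norm (f x)"] by (simp add: norm_mult)
    show "(\<lambda>x. norm (f x) * infsum (\<lambda>y. norm (g y)) UNIV) summable_on UNIV"
      using f by (rule summable_on_cmult_left)
  qed auto
  then have s: "(\<lambda>(x, y). f x * g y) summable_on UNIV"
    using abs_summable_summable[of "\<lambda>(x, y). f x * g y" UNIV] by (simp add: prod.case_distrib)
  have "infsum (\<lambda>(x, y). f x * g y) UNIV = (\<Sum>\<^sub>\<infinity>x. \<Sum>\<^sub>\<infinity>y. f x * g y)"
    using infsum_Sigma'_banach[of "\<lambda>x y. f x * g y" UNIV "\<lambda>_. UNIV"] s by simp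
  also have "\<dots> = infsum f UNIV * infsum g UNIV"
    by (simp add: infsum_cmult_right' infsum_cmult_left')
  finally show ?thesis using s by (simp add: has_sum_iff)
qed

lemma has_sum_product_nonneg:
  fixes f :: "'a \<Rightarrow> real" and g :: "'b \<Rightarrow> real"
  assumes "f summable_on UNIV" "g summable_on UNIV" "\<And>x. 0 \<le> f x" "\<And>y. 0 \<le> g y"
  shows "((\<lambda>(x, y). f x * g y) has_sum (infsum f UNIV * infsum g UNIV)) UNIV"
proof -
  have "(\<lambda>x. norm (f x)) = f" "(\<lambda>y. norm (g y)) = g" using assms(3,4) by auto
  then show ?thesis using has_sum_product[of f g] assms(1,2) by simp
qed

lemma has_sum_single_support:
  assumes "\<And>x. x \<noteq> a \<Longrightarrow> f x = 0"
  shows "(f has_sum f a) UNIV"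
  using has_sum_cong_neutral[where S=UNIV and T="{a}" and f=f and g=f] has_sum_finite[of "{a}" f] assms
  by auto

section \<open>Square-summable functions\<close>

definition lnorm2 :: "('p \<Rightarrow> complex) \<Rightarrow> real" where
  "lnorm2 f = (\<Sum>\<^sub>\<infinity>x. (cmod (f x))^2)"

lemma lnorm2_nonneg: "0 \<le> lnorm2 f"
  unfolding lnorm2_def by (rule infsum_nonneg) simp

lemma lnorm_eq_sqrt_lnorm2: "lnorm f = sqrt (lnorm2 f)"
  by (simp add: lnorm_def lnorm2_def)

lemma lnorm_nonneg: "0 \<le> lnorm f"
  by (simp add: lnorm_eq_sqrt_lnorm2 lnorm2_nonneg)

lemma lnorm_power2: "(lnorm f)^2 = lnorm2 f"
  by (simp add: lnorm_eq_sqrt_lnorm2 lnorm2_nonneg)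

lemma lnorm2_eq_0_iff:
  assumes "f \<in> l2"
  shows "lnorm2 f = 0 \<longleftrightarrow> f = (\<lambda>_. 0)"
proof
  assume "lnorm2 f = 0"
  then have "(cmod (f x))^2 = 0" for x
    using assms by (intro nonneg_infsum_le_0D[where A=UNIV]) (auto simp: lnorm2_def l2_def)
  then show "f = (\<lambda>_. 0)" by auto
qed (simp add: lnorm2_def)

lemma l2_cauchy_schwarz_abs:
  assumes "f \<in> l2" "g \<in> l2"
  shows "(\<lambda>x. cmod (f x) * cmod (g x)) summable_on UNIV"
    and "(\<Sum>\<^sub>\<infinity>x. cmod (f x) * cmod (g x)) \<le> lnorm f * lnorm g"
proof -
  have finite_sums: "(\<Sum>x\<in>F. cmod (f x) * cmod (g x)) \<le> lnorm f * lnorm g" if "finite F" for F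
  proof -
    have "(\<Sum>x\<in>F. cmod (f x) * cmod (g x))
        \<le> sqrt (\<Sum>x\<in>F. (cmod (f x))^2) * sqrt (\<Sum>x\<in>F. (cmod (g x))^2)"
      using Cauchy_Schwarz_ineq_sum[of "\<lambda>x. cmod (f x)" "\<lambda>x. cmod (g x)" F]
      by (simp add: real_le_rsqrt flip: real_sqrt_mult)
    also have "\<dots> \<le> lnorm f * lnorm g"
      unfolding lnorm_def using assms that
      by (intro mult_mono real_sqrt_le_mono finite_sum_le_infsum)
        (auto simp: l2_def intro: infsum_nonneg sum_nonneg)
    finally show ?thesis .
  qed
  show s: "(\<lambda>x. cmod (f x) * cmod (g x)) summable_on UNIV"
    by (rule nonneg_bdd_above_summable_on) (auto intro: finite_sums)
  show "(\<Sum>\<^sub>\<infinity>x. cmod (f x) * cmod (g x)) \<le> lnorm f * lnorm g"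
    by (rule infsum_le_finite_sums[OF s]) (use finite_sums in auto)
qed

lemma l2_mult_summable:
  assumes "f \<in> l2" "g \<in> l2"
  shows "(\<lambda>x. f x * g x) summable_on UNIV"
  by (rule abs_summable_summable) (use l2_cauchy_schwarz_abs(1)[OF assms] in \<open>simp add: norm_mult\<close>)

lemma l2_cauchy_schwarz:
  assumes "f \<in> l2" "g \<in> l2"
  shows "cmod (\<Sum>\<^sub>\<infinity>x. f x * g x) \<le> lnorm f * lnorm g"
proof -
  have "cmod (\<Sum>\<^sub>\<infinity>x. f x * g x) \<le> (\<Sum>\<^sub>\<infinity>x. cmod (f x) * cmod (g x))"
    using norm_infsum_bound[of "\<lambda>x. f x * g x" UNIV] l2_cauchy_schwarz_abs(1)[OF assms]
    by (simp add: norm_mult)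
  also have "\<dots> \<le> lnorm f * lnorm g" by (rule l2_cauchy_schwarz_abs(2)[OF assms])
  finally show ?thesis .
qed

lemma l2_cauchy_schwarz_sq:
  assumes "f \<in> l2" "g \<in> l2"
  shows "(cmod (\<Sum>\<^sub>\<infinity>x. f x * g x))^2 \<le> lnorm2 f * lnorm2 g"
proof -
  have "(cmod (\<Sum>\<^sub>\<infinity>x. f x * g x))^2 \<le> (lnorm f * lnorm g)^2"
    by (rule power_mono[OF l2_cauchy_schwarz[OF assms]]) simp
  then show ?thesis by (simp add: lnorm_eq_sqrt_lnorm2 power_mult_distrib lnorm2_nonneg)
qed

lemma l2_cnj: "f \<in> l2 \<Longrightarrow> (\<lambda>x. cnj (f x)) \<in> l2"
  by (simp add: l2_def)

lemma lnorm2_cnj: "lnorm2 (\<lambda>x. cnj (f x)) = lnorm2 f"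
  by (simp add: lnorm2_def)

lemma l2_cmult: "f \<in> l2 \<Longrightarrow> (\<lambda>x. c * f x) \<in> l2"
  by (auto simp: l2_def norm_mult power_mult_distrib intro: summable_on_cmult_right)

lemma l2_add:
  assumes "f \<in> l2" "g \<in> l2"
  shows "(\<lambda>x. f x + g x) \<in> l2"
  unfolding l2_def mem_Collect_eq
proof (rule summable_on_comparison_test)
  show "(\<lambda>x. 2 * (cmod (f x))^2 + 2 * (cmod (g x))^2) summable_on UNIV"
    using assms by (auto simp: l2_def intro!: summable_on_add summable_on_cmult_right)
  show "(cmod (f x + g x))^2 \<le> 2 * (cmod (f x))^2 + 2 * (cmod (g x))^2" for x
  proof -
    have "(cmod (f x + g x))^2 \<le> (cmod (f x) + cmod (g x))^2"
      by (simp add: power_mono norm_triangle_ineq)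
    also have "\<dots> \<le> 2 * (cmod (f x))^2 + 2 * (cmod (g x))^2"
      using sum_squares_bound[of "cmod (f x)" "cmod (g x)"] by (simp add: power2_sum)
    finally show ?thesis .
  qed
qed simp

lemma l2_diff: "f \<in> l2 \<Longrightarrow> g \<in> l2 \<Longrightarrow> (\<lambda>x. f x - g x) \<in> l2"
  using l2_add[of f "\<lambda>x. -1 * g x"] l2_cmult[of g "-1"] by simp

lemma l2_comb:
  assumes "finite S" "\<And>s. s \<in> S \<Longrightarrow> f s \<in> l2"
  shows "(\<lambda>x. \<Sum>s\<in>S. c s * f s x) \<in> l2"
  using assms
proof (induction S rule: finite_induct)
  case empty
  show ?case by (simp add: l2_def)
next
  case (insert s S)
  then show ?case by (simp add: l2_add l2_cmult)
qed

lemma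
  assumes "f \<in> l2" "g \<in> l2"
  shows l2_tensor: "(\<lambda>(x, y). f x * g y) \<in> l2"
    and lnorm2_tensor: "lnorm2 (\<lambda>(x, y). f x * g y) = lnorm2 f * lnorm2 g"
proof -
  have "(\<lambda>z. (cmod (case z of (x, y) \<Rightarrow> f x * g y))^2) = (\<lambda>(x, y). (cmod (f x))^2 * (cmod (g y))^2)"
    by (auto simp: norm_mult power_mult_distrib)
  moreover have "((\<lambda>(x, y). (cmod (f x))^2 * (cmod (g y))^2) has_sum lnorm2 f * lnorm2 g) UNIV"
    unfolding lnorm2_def by (rule has_sum_product_nonneg) (use assms in \<open>auto simp: l2_def\<close>)
  ultimately have "((\<lambda>z. (cmod (case z of (x, y) \<Rightarrow> f x * g y))^2) has_sum lnorm2 f * lnorm2 g) UNIV"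
    by simp
  then show "(\<lambda>(x, y). f x * g y) \<in> l2" and "lnorm2 (\<lambda>(x, y). f x * g y) = lnorm2 f * lnorm2 g"
    unfolding l2_def lnorm2_def mem_Collect_eq has_sum_iff by blast+
qed

lemma
  assumes "bij h"
  shows l2_reindex: "(\<lambda>x. f (h x)) \<in> l2 \<longleftrightarrow> f \<in> l2"
    and lnorm2_reindex: "lnorm2 (\<lambda>x. f (h x)) = lnorm2 f"
  using summable_on_reindex_bij_betw[OF assms, of "\<lambda>y. (cmod (f y))^2"]
    infsum_reindex_bij_betw[OF assms, of "\<lambda>y. (cmod (f y))^2"]
  by (simp_all add: l2_def lnorm2_def)

lemma
  assumes "(g has_sum s) UNIV" "\<And>x. (cmod (f x))^2 \<le> g x"
  shows l2_dominated: "f \<in> l2"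
    and lnorm2_dominated: "lnorm2 f \<le> s"
proof -
  have "(\<lambda>x. (cmod (f x))^2) summable_on UNIV"
    by (rule summable_on_comparison_test[of g]) (use assms in \<open>auto dest: has_sum_imp_summable\<close>)
  then show "f \<in> l2" by (simp add: l2_def)
  show "lnorm2 f \<le> s"
    unfolding lnorm2_def by (rule has_sum_mono[OF has_sum_infsum assms]) fact
qed

lemma linner_cnj: "linner y x = cnj (linner x y)"
  unfolding linner_def by (simp flip: infsum_cnj) (simp add: mult.commute)

lemma linner_cmult_left: "linner (\<lambda>p. c * x p) y = c * linner x y"
  unfolding linner_def by (simp add: mult.assoc infsum_cmult_right')

lemma linner_cmult_right: "linner x (\<lambda>p. c * y p) = cnj c * linner x y"
  by (simp add: linner_cnj[of x] linner_cmult_left)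

lemma linner_comb_left:
  assumes "finite S" "\<And>s. s \<in> S \<Longrightarrow> f s \<in> l2" "y \<in> l2"
  shows "linner (\<lambda>p. \<Sum>s\<in>S. c s * f s p) y = (\<Sum>s\<in>S. c s * linner (f s) y)"
proof -
  have "linner (\<lambda>p. \<Sum>s\<in>S. c s * f s p) y = (\<Sum>\<^sub>\<infinity>p. \<Sum>s\<in>S. c s * (f s p * cnj (y p)))"
    unfolding linner_def by (simp add: sum_distrib_right mult.assoc)
  also have "\<dots> = (\<Sum>s\<in>S. c s * linner (f s) y)"
    using assms by (subst infsum_sum)
      (auto simp: linner_def infsum_cmult_right' intro!: summable_on_cmult_right l2_mult_summable l2_cnj)
  finally show ?thesis .
qed

lemma linner_comb_right:
  assumes "finite S" "\<And>s. s \<in> S \<Longrightarrow> f s \<in> l2" "y \<in> l2"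
  shows "linner y (\<lambda>p. \<Sum>s\<in>S. c s * f s p) = (\<Sum>s\<in>S. cnj (c s) * linner y (f s))"
  using linner_comb_left[OF assms, where c=c] by (subst linner_cnj) (simp add: linner_cnj[of y])

lemma linner_diff_left:
  assumes "x \<in> l2" "y \<in> l2" "z \<in> l2"
  shows "linner (\<lambda>p. x p - y p) z = linner x z - linner y z"
  unfolding linner_def using assms
  by (simp add: left_diff_distrib infsum_diff l2_mult_summable l2_cnj)

lemma linner_self:
  assumes "x \<in> l2"
  shows "linner x x = of_real (lnorm2 x)"
proof -
  have "((\<lambda>p. complex_of_real ((cmod (x p))^2)) has_sum of_real (lnorm2 x)) UNIV"
    using assms unfolding lnorm2_def l2_def by (intro has_sum_of_real has_sum_infsum) simp
  then show ?thesis unfolding linner_def complex_norm_square by (rule infsumI)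
qed

lemma linner_cauchy_schwarz: "x \<in> l2 \<Longrightarrow> y \<in> l2 \<Longrightarrow> cmod (linner x y) \<le> lnorm x * lnorm y"
  unfolding linner_def using l2_cauchy_schwarz[of x "\<lambda>p. cnj (y p)"]
  by (simp add: l2_cnj lnorm_def)

lemma bessel_inequality:
  assumes "v \<in> l2" "\<And>i. u i \<in> l2" "0 \<le> M"
    and "\<And>F c. finite F \<Longrightarrow> lnorm2 (\<lambda>x. \<Sum>i\<in>F. c i * u i x) \<le> M * (\<Sum>i\<in>F. (cmod (c i))^2)"
  shows "(\<lambda>i. (cmod (linner v (u i)))^2) summable_on UNIV"
    and "(\<Sum>\<^sub>\<infinity>i. (cmod (linner v (u i)))^2) \<le> M * lnorm2 v"
proof -
  have finite_sums: "(\<Sum>i\<in>F. (cmod (linner v (u i)))^2) \<le> M * lnorm2 v" if F: "finite F" for F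
  proof -
    define s where "s = (\<Sum>i\<in>F. (cmod (linner v (u i)))^2)"
    define y where "y = (\<lambda>x. \<Sum>i\<in>F. linner v (u i) * u i x)"
    have s0: "0 \<le> s" by (simp add: s_def sum_nonneg)
    have "of_real s = (\<Sum>i\<in>F. linner v (u i) * linner (u i) v)"
      unfolding s_def of_real_sum complex_norm_square by (simp add: linner_cnj[of _ v])
    also have "\<dots> = linner y v"
      unfolding y_def by (rule linner_comb_left[OF F assms(2,1), symmetric])
    finally have "s = cmod (linner y v)" using s0 by (metis norm_of_real abs_of_nonneg)
    also have "\<dots> \<le> lnorm y * lnorm v"
      using F assms(1,2) by (intro linner_cauchy_schwarz) (simp_all add: y_def l2_comb)
    also have "\<dots> \<le> sqrt (M * s) * lnorm v"
      using assms(4)[OF F, of "\<lambda>i. linner v (u i)"]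
      by (intro mult_right_mono) (simp_all add: y_def s_def lnorm_eq_sqrt_lnorm2 lnorm2_nonneg)
    finally have le: "s \<le> sqrt s * sqrt (M * lnorm2 v)"
      by (simp add: lnorm_eq_sqrt_lnorm2 real_sqrt_mult ac_simps)
    have "sqrt s \<le> sqrt (M * lnorm2 v)"
    proof (cases "s = 0")
      case True
      then show ?thesis using assms(3) lnorm2_nonneg[of v] by simp
    next
      case False
      then have "0 < sqrt s" using s0 by simp
      moreover have "sqrt s * sqrt s \<le> sqrt s * sqrt (M * lnorm2 v)" using le s0 by simp
      ultimately show ?thesis by (rule mult_le_cancel_left_pos[THEN iffD1])
    qed
    then show ?thesis by (simp add: s_def)
  qed
  show s: "(\<lambda>i. (cmod (linner v (u i)))^2) summable_on UNIV"
    by (rule nonneg_bdd_above_summable_on) (auto intro: finite_sums)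
  show "(\<Sum>\<^sub>\<infinity>i. (cmod (linner v (u i)))^2) \<le> M * lnorm2 v"
    by (rule infsum_le_finite_sums[OF s]) (use finite_sums in auto)
qed

section \<open>Kernels\<close>

definition hs_norm2 :: "('p \<Rightarrow> 'q \<Rightarrow> complex) \<Rightarrow> real" where
  "hs_norm2 X = (\<Sum>\<^sub>\<infinity>(p, q). (cmod (X p q))^2)"

lemma hs_norm_eq_sqrt_hs_norm2: "hs_norm X = sqrt (hs_norm2 X)"
  by (simp add: hs_norm_def hs_norm2_def)

lemma hs_norm2_nonneg: "0 \<le> hs_norm2 X"
  unfolding hs_norm2_def by (rule infsum_nonneg) auto

lemma hs_iff_l2: "hs X \<longleftrightarrow> (\<lambda>(p, q). X p q) \<in> l2"
  by (simp add: hs_def l2_def case_prod_unfold)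

lemma hs_norm2_eq_lnorm2: "hs_norm2 X = lnorm2 (\<lambda>(p, q). X p q)"
  by (simp add: hs_norm2_def lnorm2_def case_prod_unfold)

lemma
  assumes "hs X"
  shows hs_row_l2: "X p \<in> l2"
    and hs_col_l2: "(\<lambda>p. X p q) \<in> l2"
    and has_sum_row_lnorm2: "((\<lambda>p. lnorm2 (X p)) has_sum hs_norm2 X) UNIV"
    and has_sum_col_lnorm2: "((\<lambda>q. lnorm2 (\<lambda>p. X p q)) has_sum hs_norm2 X) UNIV"
proof -
  have s: "(\<lambda>z. (cmod (X (fst z) (snd z)))^2) summable_on UNIV"
    using assms by (simp add: hs_def case_prod_unfold)
  show "X p \<in> l2" "(\<lambda>p. X p q) \<in> l2"
    using summable_on_pair_iterated(3,4)[OF s] by (simp_all add: l2_def)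
  show "((\<lambda>p. lnorm2 (X p)) has_sum hs_norm2 X) UNIV"
    using summable_on_pair_iterated(1)[OF s] infsum_pair_iterated(1)[OF s]
    by (simp add: has_sum_iff lnorm2_def hs_norm2_def case_prod_unfold)
  show "((\<lambda>q. lnorm2 (\<lambda>p. X p q)) has_sum hs_norm2 X) UNIV"
    using summable_on_pair_iterated(2)[OF s] infsum_pair_iterated(2)[OF s]
    by (simp add: has_sum_iff lnorm2_def hs_norm2_def case_prod_unfold)
qed

lemma
  shows hs_transpose_iff: "hs (\<lambda>q p. X p q) \<longleftrightarrow> hs X"
    and hs_norm2_transpose: "hs_norm2 (\<lambda>q p. X p q) = hs_norm2 X"
  using l2_reindex[OF bij_swap, of "\<lambda>(p, q). X p q"] lnorm2_reindex[OF bij_swap, of "\<lambda>(p, q). X p q"]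
  by (simp_all add: hs_iff_l2 hs_norm2_eq_lnorm2 case_prod_unfold)

lemma
  shows hs_kadj_iff: "hs (kadj X) \<longleftrightarrow> hs X"
    and hs_norm2_kadj: "hs_norm2 (kadj X) = hs_norm2 X"
  using hs_transpose_iff[of X] hs_norm2_transpose[of X]
  by (simp_all add: kadj_def hs_def hs_norm2_def)

lemma
  shows hs_ksharp_iff: "hs (ksharp X) \<longleftrightarrow> hs X"
    and hs_norm2_ksharp: "hs_norm2 (ksharp X) = hs_norm2 X"
  unfolding ksharp_def by (rule hs_transpose_iff, rule hs_norm2_transpose)

lemma hs_kadj: "hs X \<Longrightarrow> hs (kadj X)"
  by (simp add: hs_kadj_iff)

lemma
  shows l2_kvec_iff: "kvec X \<in> l2 \<longleftrightarrow> hs X"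
    and lnorm2_kvec: "lnorm2 (kvec X) = hs_norm2 X"
  using hs_transpose_iff[of X] hs_norm2_transpose[of X]
  by (simp_all add: hs_iff_l2 hs_norm2_eq_lnorm2 kvec_def)

lemma hs_kunvec_iff: "hs (kunvec z) \<longleftrightarrow> z \<in> l2"
  using hs_transpose_iff[of "\<lambda>a b. z (a, b)"] by (simp add: hs_iff_l2 kunvec_def)

lemma
  assumes "hs X" "v \<in> l2"
  shows kapply_l2: "kapply X v \<in> l2"
    and lnorm2_kapply_le: "lnorm2 (kapply X v) \<le> hs_norm2 X * lnorm2 v"
proof -
  have "((\<lambda>p. lnorm2 (X p) * lnorm2 v) has_sum hs_norm2 X * lnorm2 v) UNIV"
    by (rule has_sum_cmult_left[OF has_sum_row_lnorm2[OF assms(1)]])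
  moreover have "(cmod (kapply X v p))^2 \<le> lnorm2 (X p) * lnorm2 v" for p
    unfolding kapply_def by (rule l2_cauchy_schwarz_sq[OF hs_row_l2[OF assms(1)] assms(2)])
  ultimately show "kapply X v \<in> l2" "lnorm2 (kapply X v) \<le> hs_norm2 X * lnorm2 v"
    by (rule l2_dominated, rule lnorm2_dominated)
qed

lemma kapply_comb:
  assumes "hs X" "finite S" "\<And>s. s \<in> S \<Longrightarrow> f s \<in> l2"
  shows "kapply X (\<lambda>q. \<Sum>s\<in>S. c s * f s q) = (\<lambda>p. \<Sum>s\<in>S. c s * kapply X (f s) p)"
proof
  fix p
  have "kapply X (\<lambda>q. \<Sum>s\<in>S. c s * f s q) p = (\<Sum>\<^sub>\<infinity>q. \<Sum>s\<in>S. c s * (X p q * f s q))"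
    unfolding kapply_def by (simp add: sum_distrib_left mult.left_commute)
  also have "\<dots> = (\<Sum>s\<in>S. c s * kapply X (f s) p)"
    using assms by (subst infsum_sum)
      (auto simp: kapply_def infsum_cmult_right'
        intro!: summable_on_cmult_right l2_mult_summable hs_row_l2[OF assms(1)])
  finally show "kapply X (\<lambda>q. \<Sum>s\<in>S. c s * f s q) p = (\<Sum>s\<in>S. c s * kapply X (f s) p)" .
qed

lemma kapply_diff:
  assumes "hs X" "x \<in> l2" "y \<in> l2"
  shows "kapply X (\<lambda>q. x q - y q) = (\<lambda>p. kapply X x p - kapply X y p)"
  unfolding kapply_def using assms
  by (simp add: right_diff_distrib infsum_diff l2_mult_summable hs_row_l2)

lemma kapply_kcomp:
  assumes "hs X" "hs Y" "v \<in> l2"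
  shows "kapply (kcomp X Y) v = kapply X (kapply Y v)"
proof
  fix p
  have t: "(\<lambda>(r, q). X p r * v q) \<in> l2"
    by (rule l2_tensor[OF hs_row_l2[OF assms(1)] assms(3)])
  have s: "(\<lambda>(r, q). X p r * Y r q * v q) summable_on UNIV"
    using l2_mult_summable[OF t hs_iff_l2[THEN iffD1, OF assms(2)]]
    by (simp add: case_prod_unfold ac_simps)
  have "kapply (kcomp X Y) v p = (\<Sum>\<^sub>\<infinity>q. \<Sum>\<^sub>\<infinity>r. X p r * Y r q * v q)"
    unfolding kapply_def kcomp_def by (simp only: infsum_cmult_left')
  also have "\<dots> = (\<Sum>\<^sub>\<infinity>r. \<Sum>\<^sub>\<infinity>q. X p r * Y r q * v q)"
    using infsum_pair_iterated[OF s] by simp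
  also have "\<dots> = kapply X (kapply Y v) p"
    unfolding kapply_def by (simp add: mult.assoc infsum_cmult_right')
  finally show "kapply (kcomp X Y) v p = kapply X (kapply Y v) p" .
qed

lemma linner_kapply_kadj:
  assumes "hs X" "x \<in> l2" "y \<in> l2"
  shows "linner (kapply X x) y = linner x (kapply (kadj X) y)"
proof -
  have t: "(\<lambda>(p, q). cnj (y p) * x q) \<in> l2"
    by (rule l2_tensor[OF l2_cnj[OF assms(3)] assms(2)])
  have s: "(\<lambda>(p, q). X p q * x q * cnj (y p)) summable_on UNIV"
    using l2_mult_summable[OF t hs_iff_l2[THEN iffD1, OF assms(1)]]
    by (simp add: case_prod_unfold ac_simps)
  have "linner (kapply X x) y = (\<Sum>\<^sub>\<infinity>p. \<Sum>\<^sub>\<infinity>q. X p q * x q * cnj (y p))"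
    unfolding linner_def kapply_def by (simp only: infsum_cmult_left')
  also have "\<dots> = (\<Sum>\<^sub>\<infinity>q. \<Sum>\<^sub>\<infinity>p. X p q * x q * cnj (y p))"
    using infsum_pair_iterated[OF s] by simp
  also have "\<dots> = linner x (kapply (kadj X) y)"
  proof -
    have "(\<Sum>\<^sub>\<infinity>p. X p q * x q * cnj (y p)) = x q * cnj (\<Sum>\<^sub>\<infinity>p. cnj (X p q) * y p)" for q
      by (simp add: ac_simps flip: infsum_cnj infsum_cmult_right')
    then show ?thesis by (simp add: linner_def kapply_def kadj_def)
  qed
  finally show ?thesis .
qed

lemma linner_kapply_gram:
  assumes "hs A" "x \<in> l2"
  shows "linner (kapply (kcomp A (kadj A)) x) x = of_real (lnorm2 (kapply (kadj A) x))"
proof -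
  have "kapply (kadj A) x \<in> l2" by (rule kapply_l2[OF hs_kadj[OF assms(1)] assms(2)])
  then show ?thesis
    using assms by (simp add: kapply_kcomp hs_kadj linner_kapply_kadj linner_self)
qed

lemma hs_inner_theta:
  assumes "hs X" "x \<in> l2" "y \<in> l2"
  shows "hs_inner X (theta x y) = linner (kapply X y) x"
proof -
  have t: "(\<lambda>(p, q). cnj (x p) * y q) \<in> l2"
    by (rule l2_tensor[OF l2_cnj[OF assms(2)] assms(3)])
  have s: "(\<lambda>(p, q). X p q * y q * cnj (x p)) summable_on UNIV"
    using l2_mult_summable[OF t hs_iff_l2[THEN iffD1, OF assms(1)]]
    by (simp add: case_prod_unfold ac_simps)
  have "hs_inner X (theta x y) = (\<Sum>\<^sub>\<infinity>(p, q). X p q * y q * cnj (x p))"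
    unfolding hs_inner_def theta_def by (simp add: ac_simps)
  also have "\<dots> = linner (kapply X y) x"
    using infsum_pair_iterated(1)[OF s]
    by (simp add: linner_def kapply_def case_prod_unfold infsum_cmult_left')
  finally show ?thesis .
qed

lemma
  assumes "hs X" "hs Y"
  shows hs_kcomp: "hs (kcomp X Y)"
    and hs_norm2_kcomp_le: "hs_norm2 (kcomp X Y) \<le> hs_norm2 X * hs_norm2 Y"
proof -
  have "((\<lambda>(p, q). lnorm2 (X p) * lnorm2 (\<lambda>r. Y r q)) has_sum hs_norm2 X * hs_norm2 Y) UNIV"
    using has_sum_product_nonneg[of "\<lambda>p. lnorm2 (X p)" "\<lambda>q. lnorm2 (\<lambda>r. Y r q)"]
      has_sum_row_lnorm2[OF assms(1)] has_sum_col_lnorm2[OF assms(2)]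
    by (auto simp: lnorm2_nonneg has_sum_iff)
  moreover have "(cmod ((\<lambda>(p, q). kcomp X Y p q) z))^2 \<le> (\<lambda>(p, q). lnorm2 (X p) * lnorm2 (\<lambda>r. Y r q)) z" for z
    using l2_cauchy_schwarz_sq[OF hs_row_l2[OF assms(1)] hs_col_l2[OF assms(2)]]
    by (auto simp: kcomp_def split: prod.split)
  ultimately show "hs (kcomp X Y)" "hs_norm2 (kcomp X Y) \<le> hs_norm2 X * hs_norm2 Y"
    unfolding hs_iff_l2 hs_norm2_eq_lnorm2 by (rule l2_dominated, rule lnorm2_dominated)
qed

lemma hs_norm_theta: "w \<in> l2 \<Longrightarrow> hs_norm (theta w w) = lnorm2 w"
  using lnorm2_tensor[of w "\<lambda>q. cnj (w q)"]
  by (simp add: hs_norm_eq_sqrt_hs_norm2 hs_norm2_eq_lnorm2 theta_def l2_cnj lnorm2_cnj lnorm2_nonneg)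

definition kkron :: "('a \<Rightarrow> 'c \<Rightarrow> complex) \<Rightarrow> ('b \<Rightarrow> 'd \<Rightarrow> complex) \<Rightarrow> ('a \<times> 'b \<Rightarrow> 'c \<times> 'd \<Rightarrow> complex)" where
  "kkron A B = (\<lambda>(a, b) (c, d). A a c * B b d)"

lemma ktensor_eq_kkron: "ktensor P Q = kkron P Q"
  by (simp add: ktensor_def kkron_def)

lemma kadj_kkron: "kadj (kkron A B) = kkron (kadj A) (kadj B)"
  by (auto simp: kadj_def kkron_def fun_eq_iff)

lemma
  fixes A :: "'a \<Rightarrow> 'c \<Rightarrow> complex" and B :: "'b \<Rightarrow> 'd \<Rightarrow> complex"
  assumes "hs A" "hs B"
  shows hs_kkron: "hs (kkron A B)"
    and hs_norm2_kkron: "hs_norm2 (kkron A B) = hs_norm2 A * hs_norm2 B"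
proof -
  define h :: "('a \<times> 'b) \<times> ('c \<times> 'd) \<Rightarrow> ('a \<times> 'c) \<times> ('b \<times> 'd)"
    where "h = (\<lambda>((a, b), (c, d)). ((a, c), (b, d)))"
  have "bij h"
    by (rule o_bij[where g="\<lambda>((a, c), (b, d)). ((a, b), (c, d))"]) (auto simp: h_def fun_eq_iff)
  moreover have "(\<lambda>(p, q). kkron A B p q) = (\<lambda>z. (\<lambda>(x, y). (\<lambda>(a, c). A a c) x * (\<lambda>(b, d). B b d) y) (h z))"
    by (auto simp: kkron_def h_def fun_eq_iff)
  moreover have "(\<lambda>(a, c). A a c) \<in> l2" "(\<lambda>(b, d). B b d) \<in> l2"
    using assms by (simp_all add: hs_iff_l2)
  ultimately show "hs (kkron A B)" "hs_norm2 (kkron A B) = hs_norm2 A * hs_norm2 B"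
    by (simp_all add: hs_iff_l2 hs_norm2_eq_lnorm2 l2_reindex lnorm2_reindex l2_tensor lnorm2_tensor)
qed

lemma kcomp_kkron:
  assumes "hs A" "hs B" "hs C" "hs D"
  shows "kcomp (kkron A B) (kkron C D) = kkron (kcomp A C) (kcomp B D)"
proof -
  have "kcomp (kkron A B) (kkron C D) (a, b) (a', b') = kkron (kcomp A C) (kcomp B D) (a, b) (a', b')"
    for a b a' b'
  proof -
    have "(\<lambda>c. norm (A a c * C c a')) summable_on UNIV" "(\<lambda>d. norm (B b d * D d b')) summable_on UNIV"
      using l2_cauchy_schwarz_abs(1)[OF hs_row_l2[OF assms(1)] hs_col_l2[OF assms(3)]]
        l2_cauchy_schwarz_abs(1)[OF hs_row_l2[OF assms(2)] hs_col_l2[OF assms(4)]]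
      by (simp_all add: norm_mult)
    from has_sum_product[OF this] show ?thesis
      unfolding kcomp_def kkron_def by (simp add: infsumI case_prod_unfold ac_simps)
  qed
  then show ?thesis by (simp add: fun_eq_iff)
qed

section \<open>Finite spans and rank\<close>

definition fspan :: "('p \<Rightarrow> complex) set \<Rightarrow> ('p \<Rightarrow> complex) set" where
  "fspan S = {f. \<exists>\<alpha>. f = (\<lambda>x. \<Sum>s\<in>S. \<alpha> s * s x)}"

definition orthonormal :: "('p \<Rightarrow> complex) set \<Rightarrow> bool" where
  "orthonormal Q \<longleftrightarrow> Q \<subseteq> l2 \<and> (\<forall>f\<in>Q. \<forall>g\<in>Q. linner f g = (if f = g then 1 else 0))"

lemma fspanI: "y = (\<lambda>x. \<Sum>s\<in>S. \<alpha> s * s x) \<Longrightarrow> y \<in> fspan S"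
  unfolding fspan_def by blast

lemma fspan_base:
  assumes "finite S" "s \<in> S"
  shows "s \<in> fspan S"
proof (rule fspanI[where \<alpha>="\<lambda>t. if t = s then 1 else 0"])
  have "(\<Sum>t\<in>S. (if t = s then 1 else 0) * t x) = (\<Sum>t\<in>S. if t = s then s x else 0)" for x
    by (rule sum.cong) auto
  then show "s = (\<lambda>x. \<Sum>t\<in>S. (if t = s then 1 else 0) * t x)"
    using assms by simp
qed

lemma fspan_mono:
  assumes "finite T" "S \<subseteq> T"
  shows "fspan S \<subseteq> fspan T"
proof
  fix y assume "y \<in> fspan S"
  then obtain \<alpha> where y: "y = (\<lambda>x. \<Sum>s\<in>S. \<alpha> s * s x)" by (auto simp: fspan_def)
  have "y = (\<lambda>x. \<Sum>s\<in>T. (if s \<in> S then \<alpha> s else 0) * s x)"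
    unfolding y using assms by (intro ext sum.mono_neutral_cong_left) (auto intro: finite_subset)
  then show "y \<in> fspan T" by (rule fspanI)
qed

lemma fspan_subset:
  assumes "finite T" "S \<subseteq> fspan T"
  shows "fspan S \<subseteq> fspan T"
proof
  fix y assume "y \<in> fspan S"
  then obtain \<alpha> where y: "y = (\<lambda>x. \<Sum>s\<in>S. \<alpha> s * s x)" by (auto simp: fspan_def)
  have "\<forall>s\<in>S. \<exists>\<beta>. s = (\<lambda>x. \<Sum>t\<in>T. \<beta> t * t x)"
    using assms(2) by (auto simp: fspan_def)
  then obtain \<beta> where \<beta>: "\<And>s. s \<in> S \<Longrightarrow> s = (\<lambda>x. \<Sum>t\<in>T. \<beta> s t * t x)"
    by metis
  have "y = (\<lambda>x. \<Sum>t\<in>T. (\<Sum>s\<in>S. \<alpha> s * \<beta> s t) * t x)"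
  proof
    fix x
    have "y x = (\<Sum>s\<in>S. \<alpha> s * (\<Sum>t\<in>T. \<beta> s t * t x))"
      unfolding y by (intro sum.cong refl) (subst \<beta>, auto)
    then show "y x = (\<Sum>t\<in>T. (\<Sum>s\<in>S. \<alpha> s * \<beta> s t) * t x)"
      by (simp add: sum_distrib_left sum_distrib_right mult.assoc sum.swap[of _ S T])
  qed
  then show "y \<in> fspan T" by (rule fspanI)
qed

lemma kapply_fspan:
  assumes "hs X" "finite S" "S \<subseteq> l2" "y \<in> fspan S"
  shows "kapply X y \<in> fspan (kapply X ` S)"
proof -
  obtain \<alpha> where y: "y = (\<lambda>x. \<Sum>s\<in>S. \<alpha> s * s x)" using assms(4) by (auto simp: fspan_def)
  have "kapply X y = (\<lambda>p. \<Sum>s\<in>S. \<alpha> s * kapply X s p)"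
    unfolding y using assms(1-3) by (intro kapply_comb) auto
  also have "\<dots> = (\<lambda>p. \<Sum>t\<in>kapply X ` S. (\<Sum>s\<in>{s\<in>S. kapply X s = t}. \<alpha> s) * t p)"
  proof
    fix p
    have "(\<Sum>s\<in>S. \<alpha> s * kapply X s p)
        = (\<Sum>t\<in>kapply X ` S. \<Sum>s\<in>{s\<in>S. kapply X s = t}. \<alpha> s * kapply X s p)"
      by (rule sum.image_gen[OF assms(2)])
    also have "\<dots> = (\<Sum>t\<in>kapply X ` S. (\<Sum>s\<in>{s\<in>S. kapply X s = t}. \<alpha> s) * t p)"
      by (intro sum.cong refl) (simp add: sum_distrib_right)
    finally show "(\<Sum>s\<in>S. \<alpha> s * kapply X s p)
        = (\<Sum>t\<in>kapply X ` S. (\<Sum>s\<in>{s\<in>S. kapply X s = t}. \<alpha> s) * t p)" .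
  qed
  finally show ?thesis by (rule fspanI)
qed

lemma
  assumes "finite F" "\<And>i. i \<in> F \<Longrightarrow> u i \<in> l2"
    and "\<And>i j. i \<in> F \<Longrightarrow> j \<in> F \<Longrightarrow> linner (u i) (u j) = (if i = j then 1 else 0)"
  shows linner_orthonormal_sum: "j \<in> F \<Longrightarrow> linner (\<lambda>x. \<Sum>i\<in>F. c i * u i x) (u j) = c j"
    and lnorm2_orthonormal_sum: "lnorm2 (\<lambda>x. \<Sum>i\<in>F. c i * u i x) = (\<Sum>i\<in>F. (cmod (c i))^2)"
proof -
  show coeff: "linner (\<lambda>x. \<Sum>i\<in>F. c i * u i x) (u j) = c j" if "j \<in> F" for j
  proof -
    have "linner (\<lambda>x. \<Sum>i\<in>F. c i * u i x) (u j) = (\<Sum>i\<in>F. c i * linner (u i) (u j))"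
      using assms that by (simp add: linner_comb_left)
    also have "\<dots> = (\<Sum>i\<in>F. if i = j then c j else 0)"
      using assms(3) that by (intro sum.cong) auto
    finally show ?thesis using assms(1) that by simp
  qed
  have "of_real (lnorm2 (\<lambda>x. \<Sum>i\<in>F. c i * u i x))
      = linner (\<lambda>x. \<Sum>i\<in>F. c i * u i x) (\<lambda>x. \<Sum>i\<in>F. c i * u i x)"
    using assms by (simp add: linner_self l2_comb)
  also have "\<dots> = (\<Sum>i\<in>F. cnj (c i) * c i)"
    using assms by (simp add: linner_comb_right l2_comb coeff)
  also have "\<dots> = of_real (\<Sum>i\<in>F. (cmod (c i))^2)"
    unfolding of_real_sum by (intro sum.cong refl) (simp only: complex_norm_square mult.commute)
  finally show "lnorm2 (\<lambda>x. \<Sum>i\<in>F. c i * u i x) = (\<Sum>i\<in>F. (cmod (c i))^2)"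
    using of_real_eq_iff by blast
qed

lemma orthonormal_residual:
  assumes "finite Q" "orthonormal Q" "x \<in> l2" "q \<in> Q"
  shows "linner (\<lambda>p. x p - (\<Sum>f\<in>Q. linner x f * f p)) q = 0"
proof -
  have l2: "Q \<subseteq> l2" and on: "\<And>f g. f \<in> Q \<Longrightarrow> g \<in> Q \<Longrightarrow> linner f g = (if f = g then 1 else 0)"
    using assms(2) by (auto simp: orthonormal_def)
  have "linner (\<lambda>p. \<Sum>f\<in>Q. linner x f * f p) q = linner x q"
    using linner_orthonormal_sum[of Q id] assms(1,4) l2 on by auto
  moreover have "(\<lambda>p. \<Sum>f\<in>Q. linner x f * f p) \<in> l2"
    using assms(1) l2 by (intro l2_comb) auto
  ultimately show ?thesis
    using linner_diff_left[OF assms(3)] assms(4) l2 by auto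
qed

lemma orthonormal_expansion:
  assumes "finite Q" "orthonormal Q" "y \<in> fspan Q"
  shows "y = (\<lambda>x. \<Sum>f\<in>Q. linner y f * f x)"
proof -
  obtain \<beta> where y: "y = (\<lambda>x. \<Sum>f\<in>Q. \<beta> f * f x)" using assms(3) by (auto simp: fspan_def)
  have "linner y f = \<beta> f" if "f \<in> Q" for f
    using linner_orthonormal_sum[where F=Q and u=id and c=\<beta>] assms(1,2) that unfolding y
    by (auto simp: orthonormal_def)
  then show ?thesis unfolding y by (intro ext sum.cong) auto
qed

lemma orthonormal_extend:
  assumes Q: "finite Q" "orthonormal Q" and g: "g \<in> l2"
  shows "\<exists>Q'. finite Q' \<and> orthonormal Q' \<and> card Q' \<le> Suc (card Q) \<and> Q \<subseteq> Q' \<and> g \<in> fspan Q'"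
proof -
  have Q_l2: "Q \<subseteq> l2" using Q(2) by (simp add: orthonormal_def)
  define p where "p = (\<lambda>x. \<Sum>f\<in>Q. linner g f * f x)"
  define r where "r = (\<lambda>x. g x - p x)"
  have r: "r \<in> l2" unfolding r_def p_def using Q(1) Q_l2 g by (intro l2_diff l2_comb) auto
  have r_orth: "linner r f = 0" if "f \<in> Q" for f
    unfolding r_def p_def by (rule orthonormal_residual[OF Q g that])
  show ?thesis
  proof (cases "r = (\<lambda>_. 0)")
    case True
    then have "g \<in> fspan Q" by (intro fspanI[where \<alpha>="linner g"]) (auto simp: r_def p_def fun_eq_iff)
    then show ?thesis using Q by (intro exI[of _ Q]) auto
  next
    case False
    define n where "n = sqrt (lnorm2 r)"
    have n: "n > 0" "n^2 = lnorm2 r"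
      using False lnorm2_eq_0_iff[OF r] lnorm2_nonneg[of r] by (auto simp: n_def)
    define q where "q = (\<lambda>x. of_real (inverse n) * r x)"
    have "linner q q = of_real (inverse n * inverse n * n^2)"
      by (simp add: q_def linner_cmult_left linner_cmult_right linner_self[OF r] n(2) mult.assoc)
    moreover have "inverse n * inverse n * n^2 = 1"
      using n(1) by (simp add: power2_eq_square field_simps)
    ultimately have qq: "linner q q = 1"
      by (simp only: of_real_1)
    have qf: "linner q f = 0" "linner f q = 0" if "f \<in> Q" for f
      using r_orth[OF that] by (simp_all add: q_def linner_cmult_left linner_cnj[of f])
    have q_notin: "q \<notin> Q" using qf qq by force
    have "orthonormal (insert q Q)"
      using Q(2) l2_cmult[OF r] qq qf by (auto simp: orthonormal_def q_def)
    moreover have "g = (\<lambda>x. \<Sum>f\<in>insert q Q. (if f = q then of_real n else linner g f) * f x)"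
    proof
      fix x
      have "of_real n * q x = r x" using n(1) by (simp add: q_def)
      then show "g x = (\<Sum>f\<in>insert q Q. (if f = q then of_real n else linner g f) * f x)"
        using Q(1) q_notin by (auto simp: r_def p_def intro!: sum.cong)
    qed
    then have "g \<in> fspan (insert q Q)" by (rule fspanI)
    ultimately show ?thesis using Q(1) q_notin by (intro exI[of _ "insert q Q"]) auto
  qed
qed

lemma gram_schmidt:
  assumes "finite G" "G \<subseteq> l2"
  shows "\<exists>Q. finite Q \<and> orthonormal Q \<and> card Q \<le> card G \<and> G \<subseteq> fspan Q"
  using assms
proof (induction G rule: finite_induct)
  case empty
  show ?case by (rule exI[of _ "{}"]) (simp add: orthonormal_def)
next
  case (insert g G)
  then obtain Q where Q: "finite Q" "orthonormal Q" "card Q \<le> card G" "G \<subseteq> fspan Q" by auto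
  obtain Q' where Q': "finite Q'" "orthonormal Q'" "card Q' \<le> Suc (card Q)" "Q \<subseteq> Q'" "g \<in> fspan Q'"
    using orthonormal_extend[OF Q(1,2), of g] insert.prems by auto
  have "G \<subseteq> fspan Q'" using Q(4) fspan_mono[OF Q'(1,4)] by blast
  then show ?case using Q(3) Q' insert.hyps by (intro exI[of _ Q']) auto
qed

lemma
  assumes W: "hs W" and Q: "finite Q" "orthonormal Q" and rows: "\<And>c. W c \<in> fspan Q"
  shows l2_row_coefficient: "f \<in> Q \<Longrightarrow> (\<lambda>c. linner (W c) f) \<in> l2"
    and sum_lnorm2_row_coefficients: "(\<Sum>f\<in>Q. lnorm2 (\<lambda>c. linner (W c) f)) = hs_norm2 W"
proof -
  have "lnorm2 (W c) = (\<Sum>f\<in>Q. (cmod (linner (W c) f))^2)" for c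
    using lnorm2_orthonormal_sum[where F=Q and u=id and c="\<lambda>f. linner (W c) f"] Q
      orthonormal_expansion[OF Q rows, of c]
    by (auto simp: orthonormal_def)
  then have sum: "((\<lambda>c. \<Sum>f\<in>Q. (cmod (linner (W c) f))^2) has_sum hs_norm2 W) UNIV"
    using has_sum_row_lnorm2[OF W] by simp
  show l2: "(\<lambda>c. linner (W c) f) \<in> l2" if "f \<in> Q" for f
    by (rule l2_dominated[OF sum]) (use Q(1) that in \<open>auto intro: member_le_sum\<close>)
  have "(\<Sum>f\<in>Q. lnorm2 (\<lambda>c. linner (W c) f)) = (\<Sum>\<^sub>\<infinity>c. \<Sum>f\<in>Q. (cmod (linner (W c) f))^2)"
    using Q(1) l2 by (simp add: lnorm2_def infsum_sum l2_def)
  with sum show "(\<Sum>f\<in>Q. lnorm2 (\<lambda>c. linner (W c) f)) = hs_norm2 W" by (simp add: infsumI)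
qed

lemma trace_sq_le_card_hs_norm2:
  fixes W :: "'c \<Rightarrow> 'c \<Rightarrow> complex"
  assumes W: "hs W" and G: "finite G" "G \<subseteq> l2" "\<And>c. W c \<in> fspan G"
  shows "(cmod (\<Sum>\<^sub>\<infinity>c. W c c))^2 \<le> card G * hs_norm2 W"
proof -
  obtain Q where Q: "finite Q" "orthonormal Q" "card Q \<le> card G" "G \<subseteq> fspan Q"
    using gram_schmidt[OF G(1,2)] by blast
  have rows: "W c \<in> fspan Q" for c using fspan_subset[OF Q(1,4)] G(3) by blast
  define \<alpha> where "\<alpha> f c = linner (W c) f" for f c
  have \<alpha>: "\<alpha> f \<in> l2" if "f \<in> Q" for f
    unfolding \<alpha>_def by (rule l2_row_coefficient[OF W Q(1,2) rows that])
  have Q_l2: "Q \<subseteq> l2" using Q(2) by (simp add: orthonormal_def)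
  have Q_norm: "lnorm f = 1" if "f \<in> Q" for f
  proof -
    have "of_real (lnorm2 f) = (1::complex)"
      using Q(2) Q_l2 that linner_self[of f] by (auto simp: orthonormal_def)
    then show ?thesis by (simp add: lnorm_eq_sqrt_lnorm2)
  qed
  have "(\<lambda>c. W c c) = (\<lambda>c. \<Sum>f\<in>Q. \<alpha> f c * f c)"
    using orthonormal_expansion[OF Q(1,2) rows] unfolding \<alpha>_def by metis
  moreover have "(\<lambda>c. \<alpha> f c * f c) summable_on UNIV" if "f \<in> Q" for f
    using \<alpha> Q_l2 that by (auto intro: l2_mult_summable)
  ultimately have "cmod (\<Sum>\<^sub>\<infinity>c. W c c) = cmod (\<Sum>f\<in>Q. \<Sum>\<^sub>\<infinity>c. \<alpha> f c * f c)"
    using Q(1) by (simp add: infsum_sum)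
  also have "\<dots> \<le> (\<Sum>f\<in>Q. lnorm (\<alpha> f))"
    using Q_l2 Q_norm \<alpha> l2_cauchy_schwarz by (intro order.trans[OF norm_sum] sum_mono) fastforce
  finally have "(cmod (\<Sum>\<^sub>\<infinity>c. W c c))^2 \<le> (\<Sum>f\<in>Q. lnorm (\<alpha> f))^2"
    by (simp add: power_mono)
  also have "\<dots> \<le> (\<Sum>f\<in>Q. (lnorm (\<alpha> f))^2) * card Q"
    by (rule sum_squared_le_sum_of_squares)
  also have "\<dots> = hs_norm2 W * card Q"
    using sum_lnorm2_row_coefficients[OF W Q(1,2) rows] unfolding \<alpha>_def by (simp add: lnorm_power2)
  also have "\<dots> \<le> card G * hs_norm2 W"
    using Q(3) hs_norm2_nonneg[of W] by (simp add: mult.commute mult_left_mono)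
  finally show ?thesis .
qed

lemma lin_indep_fun_insert:
  assumes "lin_indep_fun S" "finite S" "y \<notin> fspan S"
  shows "lin_indep_fun (insert y S)"
  unfolding lin_indep_fun_def
proof (intro allI impI)
  fix c assume z: "(\<lambda>p. \<Sum>s\<in>insert y S. c s * s p) = (\<lambda>_. 0)"
  have y_notin: "y \<notin> S" using assms(2,3) fspan_base by blast
  have zp: "c y * y p = - (\<Sum>s\<in>S. c s * s p)" for p
    using fun_cong[OF z, of p] assms(2) y_notin by (simp add: eq_neg_iff_add_eq_0)
  have cy: "c y = 0"
  proof (rule ccontr)
    assume cy: "c y \<noteq> 0"
    have "y p = (\<Sum>s\<in>S. (- c s / c y) * s p)" for p
    proof -
      have "(\<Sum>s\<in>S. (- c s / c y) * s p) = - (\<Sum>s\<in>S. c s * s p) / c y"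
        by (simp add: sum_divide_distrib sum_negf)
      also have "\<dots> = y p" using zp[of p] cy by (simp add: field_simps)
      finally show ?thesis ..
    qed
    then have "y \<in> fspan S" by (intro fspanI) (rule ext)
    with assms(3) show False ..
  qed
  then have "(\<lambda>p. \<Sum>s\<in>S. c s * s p) = (\<lambda>_. 0)" using zp by auto
  then show "\<forall>s\<in>insert y S. c s = 0" using assms(1) cy by (simp add: lin_indep_fun_def)
qed

lemma lin_indep_fun_singleton: "y \<noteq> (\<lambda>_. 0) \<Longrightarrow> lin_indep_fun {y}"
  by (auto simp: lin_indep_fun_def fun_eq_iff)

lemma exists_finite_spanning_subset:
  assumes "\<And>S. finite S \<Longrightarrow> S \<subseteq> V \<Longrightarrow> lin_indep_fun S \<Longrightarrow> card S \<le> m"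
  shows "\<exists>S. finite S \<and> S \<subseteq> V \<and> card S \<le> m \<and> V \<subseteq> fspan S"
proof -
  define N where "N = {card S | S. finite S \<and> S \<subseteq> V \<and> lin_indep_fun S}"
  have "0 \<in> N" unfolding N_def by (intro CollectI exI[of _ "{}"]) (simp add: lin_indep_fun_def)
  have "N \<subseteq> {..m}" unfolding N_def using assms by auto
  then have fin: "finite N" by (rule finite_subset) simp
  have "Max N \<in> N" using fin \<open>0 \<in> N\<close> by (intro Max_in) auto
  then obtain S where S: "finite S" "S \<subseteq> V" "lin_indep_fun S" "card S = Max N"
    unfolding N_def by auto
  have "y \<in> fspan S" if y: "y \<in> V" for y
  proof (rule ccontr)
    assume y_out: "y \<notin> fspan S"
    then have "card (insert y S) \<in> N"
      unfolding N_def using S y lin_indep_fun_insert[OF S(3,1)] by blast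
    then have "card (insert y S) \<le> card S" using fin S(4) by simp
    then show False using S(1) y_out fspan_base[OF S(1)] by (auto simp: card_insert_if split: if_splits)
  qed
  then show ?thesis using S assms by blast
qed

lemma card_le_if_krank_le:
  assumes "krank X \<le> enat m" "finite S" "S \<subseteq> kapply X ` l2" "lin_indep_fun S"
  shows "card S \<le> m"
proof -
  have "enat (card S) \<le> krank X" unfolding krank_def
    by (rule Sup_upper) (use assms(2-4) in blast)
  then have "enat (card S) \<le> enat m" using assms(1) by (rule order_trans)
  then show ?thesis by simp
qed

lemma krank_le_imp_range_fspan:
  assumes "hs X" "krank X \<le> enat m"
  shows "\<exists>G. finite G \<and> G \<subseteq> l2 \<and> card G \<le> m \<and> (\<forall>x\<in>l2. kapply X x \<in> fspan G)"
proof -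
  obtain G where G: "finite G" "G \<subseteq> kapply X ` l2" "card G \<le> m" "kapply X ` l2 \<subseteq> fspan G"
    using exists_finite_spanning_subset[of "kapply X ` l2" m] card_le_if_krank_le[OF assms(2)] by blast
  have "G \<subseteq> l2" using G(2) kapply_l2[OF assms(1)] by blast
  with G show ?thesis by blast
qed

text \<open>\<open>A\<^sup>*\<close> vanishes on the orthogonal complement of the range of \<open>AA\<^sup>*\<close>,
  since \<open>\<langle>AA\<^sup>* r, r\<rangle> = \<parallel>A\<^sup>* r\<parallel>\<^sup>2\<close>.\<close>

lemma krank_gram_le_imp_kadj_range_fspan:
  assumes A: "hs A" and rank: "krank (kcomp A (kadj A)) \<le> enat m"
  shows "\<exists>G'. finite G' \<and> G' \<subseteq> l2 \<and> card G' \<le> m \<and> (\<forall>x\<in>l2. kapply (kadj A) x \<in> fspan G')"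
proof -
  obtain G where G: "finite G" "G \<subseteq> l2" "card G \<le> m" "\<forall>x\<in>l2. kapply (kcomp A (kadj A)) x \<in> fspan G"
    using krank_le_imp_range_fspan[OF hs_kcomp[OF A hs_kadj[OF A]] rank] by blast
  obtain Q where Q: "finite Q" "orthonormal Q" "card Q \<le> card G" "G \<subseteq> fspan Q"
    using gram_schmidt[OF G(1,2)] by blast
  have Q_l2: "Q \<subseteq> l2" using Q(2) by (simp add: orthonormal_def)
  have "kapply (kadj A) x \<in> fspan (kapply (kadj A) ` Q)" if x: "x \<in> l2" for x
  proof -
    define p where "p = (\<lambda>y. \<Sum>f\<in>Q. linner x f * f y)"
    define r where "r = (\<lambda>y. x y - p y)"
    have p: "p \<in> l2" "p \<in> fspan Q"
      unfolding p_def using Q(1) Q_l2 by (auto intro: l2_comb fspanI)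
    have r: "r \<in> l2" unfolding r_def by (rule l2_diff[OF x p(1)])
    have r_orth: "linner f r = 0" if "f \<in> Q" for f
      using orthonormal_residual[OF Q(1,2) x that] by (subst linner_cnj) (simp add: r_def p_def)
    obtain \<alpha> where "kapply (kcomp A (kadj A)) r = (\<lambda>y. \<Sum>f\<in>Q. \<alpha> f * f y)"
      using G(4) r fspan_subset[OF Q(1,4)] by (auto simp: fspan_def)
    then have "linner (kapply (kcomp A (kadj A)) r) r = 0"
      using linner_comb_left[where f="\<lambda>f. f", OF Q(1) _ r] Q_l2 r_orth by auto
    then have "lnorm2 (kapply (kadj A) r) = 0"
      by (simp add: linner_kapply_gram[OF A r])
    then have "kapply (kadj A) r = (\<lambda>_. 0)"
      using lnorm2_eq_0_iff kapply_l2[OF hs_kadj[OF A] r] by blast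
    then have "kapply (kadj A) x = kapply (kadj A) p"
      using kapply_diff[OF hs_kadj[OF A] x p(1)] by (auto simp: r_def fun_eq_iff)
    then show ?thesis using kapply_fspan[OF hs_kadj[OF A] Q(1) Q_l2 p(2)] by simp
  qed
  moreover have "card (kapply (kadj A) ` Q) \<le> m"
    using card_image_le[OF Q(1), of "kapply (kadj A)"] Q(3) G(3) by simp
  moreover have "kapply (kadj A) ` Q \<subseteq> l2"
    using Q_l2 kapply_l2[OF hs_kadj[OF A]] by blast
  ultimately show ?thesis using Q(1) by blast
qed

lemma one_le_krank:
  assumes "x \<in> l2" "kapply X x \<noteq> (\<lambda>_. 0)"
  shows "enat 1 \<le> krank X"
  unfolding krank_def
  by (rule Sup_upper) (use assms lin_indep_fun_singleton in \<open>force intro!: exI[of _ "{kapply X x}"]\<close>)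

lemma krank_le_one:
  assumes "kapply X ` l2 \<subseteq> fspan {y}"
  shows "krank X \<le> enat 1"
  unfolding krank_def
proof (rule Sup_least, clarify)
  fix S assume S: "finite S" "S \<subseteq> kapply X ` l2" "lin_indep_fun S"
  have "s1 = s2" if "s1 \<in> S" "s2 \<in> S" for s1 s2
  proof (rule ccontr)
    assume ne: "s1 \<noteq> s2"
    have "s1 \<in> fspan {y}" "s2 \<in> fspan {y}" using that S(2) assms by blast+
    then obtain t1 t2 where t: "s1 = (\<lambda>p. t1 * y p)" "s2 = (\<lambda>p. t2 * y p)"
      unfolding fspan_def by auto
    define d where "d s = (if s = s1 then t2 else if s = s2 then - t1 else 0)" for s
    have "(\<Sum>s\<in>S. d s * s p) = 0" for p
    proof -
      have "(\<Sum>s\<in>S. d s * s p)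
          = (\<Sum>s\<in>S. (if s = s1 then t2 * s1 p else 0) + (if s = s2 then - t1 * s2 p else 0))"
        by (rule sum.cong) (auto simp: d_def ne)
      also have "\<dots> = t2 * s1 p - t1 * s2 p" using S(1) that by (simp add: sum.distrib)
      finally show ?thesis by (simp add: t)
    qed
    then have "d s1 = 0" "d s2 = 0" using S(3) that by (auto simp: lin_indep_fun_def)
    then show False using ne by (simp add: d_def t split: if_splits)
  qed
  then show "enat (card S) \<le> enat 1" using card_le_Suc0_iff_eq[OF S(1)] by auto
qed

section \<open>The star product as a Gram matrix\<close>

lemma
  assumes "w \<in> l2"
  shows l2_slice: "(\<lambda>k. w (k, h)) \<in> l2"
    and has_sum_slice_lnorm2: "((\<lambda>h. lnorm2 (\<lambda>k. w (k, h))) has_sum lnorm2 w) UNIV"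
proof -
  have "hs (\<lambda>k h. w (k, h))" using assms by (simp add: hs_iff_l2)
  from hs_col_l2[OF this] has_sum_col_lnorm2[OF this]
  show "(\<lambda>k. w (k, h)) \<in> l2" "((\<lambda>h. lnorm2 (\<lambda>k. w (k, h))) has_sum lnorm2 w) UNIV"
    by (simp_all add: hs_norm2_eq_lnorm2)
qed

definition coeff_comb :: "('i \<Rightarrow> 'k \<Rightarrow> complex) \<Rightarrow> ('k \<times> 'h \<Rightarrow> complex) \<Rightarrow> 'i set \<Rightarrow> ('i \<Rightarrow> complex) \<Rightarrow> 'h \<Rightarrow> complex" where
  "coeff_comb e w F c = (\<lambda>h. \<Sum>j\<in>F. c j * coeff_vec e w j h)"

lemma
  assumes "onb e" "w \<in> l2" "finite F"
  shows l2_coeff_comb: "coeff_comb e w F c \<in> l2"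
    and lnorm2_coeff_comb_le: "lnorm2 (coeff_comb e w F c) \<le> lnorm2 w * (\<Sum>j\<in>F. (cmod (c j))^2)"
proof -
  have e: "e j \<in> l2" "linner (e i) (e j) = (if i = j then 1 else 0)" for i j
    using assms(1) by (simp_all add: onb_def)
  define E where "E = (\<lambda>k. \<Sum>j\<in>F. cnj (c j) * e j k)"
  have E: "E \<in> l2" "lnorm2 E = (\<Sum>j\<in>F. (cmod (c j))^2)"
    unfolding E_def using assms(3) e by (simp_all add: l2_comb lnorm2_orthonormal_sum)
  have "coeff_comb e w F c h = linner (\<lambda>k. w (k, h)) E" for h
  proof -
    have "coeff_comb e w F c h = (\<Sum>j\<in>F. c j * linner (\<lambda>k. w (k, h)) (e j))"
      by (simp add: coeff_comb_def coeff_vec_def linner_def mult.commute)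
    then show ?thesis
      unfolding E_def by (simp add: linner_comb_right[where f=e, OF assms(3) e(1) l2_slice[OF assms(2)]])
  qed
  then have "(cmod (coeff_comb e w F c h))^2 \<le> lnorm2 (\<lambda>k. w (k, h)) * lnorm2 E" for h
    using l2_cauchy_schwarz_sq[OF l2_slice[OF assms(2)] l2_cnj[OF E(1)]]
    by (simp add: linner_def lnorm2_cnj)
  moreover have "((\<lambda>h. lnorm2 (\<lambda>k. w (k, h)) * lnorm2 E) has_sum lnorm2 w * lnorm2 E) UNIV"
    by (rule has_sum_cmult_left[OF has_sum_slice_lnorm2[OF assms(2)]])
  ultimately show "coeff_comb e w F c \<in> l2" "lnorm2 (coeff_comb e w F c) \<le> lnorm2 w * (\<Sum>j\<in>F. (cmod (c j))^2)"
    unfolding E(2) by (auto intro: l2_dominated lnorm2_dominated)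
qed

lemma coeff_vec_l2: "onb e \<Longrightarrow> w \<in> l2 \<Longrightarrow> coeff_vec e w j \<in> l2"
  using l2_coeff_comb[of e w "{j}" "\<lambda>_. 1"] by (simp add: coeff_comb_def)

lemma krank_kunvec_coeff_comb_le:
  assumes "onb e" "w \<in> l2" "finite F"
  shows "krank (kunvec (coeff_comb e w F c)) \<le> rstar e w"
proof -
  have "lnorm (\<lambda>h. coeff_comb e w F c h - (\<Sum>i\<in>F. c i * coeff_vec e w i h)) = 0"
    by (simp add: coeff_comb_def lnorm_def)
  then have "coeff_comb e w F c \<in> Uspace e w"
    unfolding Uspace_def using l2_coeff_comb[OF assms] assms(3)
    by (intro CollectI conjI allI impI exI[of _ F] exI[of _ c]) auto
  then show ?thesis unfolding rstar_def by (rule SUP_upper)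
qed

lemma slice_theta: "slice (theta w w) (e i) (e j) = theta (coeff_vec e w i) (coeff_vec e w j)"
proof (intro ext)
  fix h h'
  have "(\<Sum>\<^sub>\<infinity>k'. cnj (e i k) * theta w w (k, h) (k', h') * e j k')
      = cnj (e i k) * w (k, h) * cnj (coeff_vec e w j h')" for k
    unfolding theta_def coeff_vec_def by (simp add: ac_simps flip: infsum_cnj infsum_cmult_right')
  then show "slice (theta w w) (e i) (e j) h h' = theta (coeff_vec e w i) (coeff_vec e w j) h h'"
    by (simp add: slice_def theta_def coeff_vec_def infsum_cmult_left')
qed

lemma star_eq_linner:
  assumes "hs A" "hs B" "coeff_vec e w i \<in> l2" "coeff_vec e w j \<in> l2"
  shows "star (theta w w) e (kcomp A (kadj A)) (kcomp B (kadj B)) i j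
    = linner (kapply (kkron (kadj A) (kadj B)) (coeff_vec e w j))
        (kapply (kkron (kadj A) (kadj B)) (coeff_vec e w i))"
proof -
  let ?T = "kkron A B"
  have T: "hs ?T" "hs (kadj ?T)" using assms(1,2) by (simp_all add: hs_kkron hs_kadj)
  have "ktensor (kcomp A (kadj A)) (kcomp B (kadj B)) = kcomp ?T (kadj ?T)"
    using assms(1,2) by (simp add: ktensor_eq_kkron kadj_kkron kcomp_kkron hs_kadj)
  then have "star (theta w w) e (kcomp A (kadj A)) (kcomp B (kadj B)) i j
      = linner (kapply ?T (kapply (kadj ?T) (coeff_vec e w j))) (coeff_vec e w i)"
    using assms(3,4) T by (simp add: star_def slice_theta hs_inner_theta hs_kcomp kapply_kcomp)
  also have "\<dots> = linner (kapply (kadj ?T) (coeff_vec e w j)) (kapply (kadj ?T) (coeff_vec e w i))"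
    using assms(3,4) T by (simp add: linner_kapply_kadj kapply_l2)
  finally show ?thesis by (simp add: kadj_kkron)
qed

lemma star_quadratic_form:
  assumes "onb e" "w \<in> l2" "hs A" "hs B" "finite F"
  shows "(\<Sum>i\<in>F. \<Sum>j\<in>F. cnj (d i) * star (theta w w) e (kcomp A (kadj A)) (kcomp B (kadj B)) i j * c j)
    = linner (kapply (kkron (kadj A) (kadj B)) (coeff_comb e w F c))
        (kapply (kkron (kadj A) (kadj B)) (coeff_comb e w F d))"
proof -
  let ?W = "kapply (kkron (kadj A) (kadj B))"
  have W: "hs (kkron (kadj A) (kadj B))" using assms(3,4) by (simp add: hs_kkron hs_kadj)
  have u: "coeff_vec e w j \<in> l2" for j by (rule coeff_vec_l2[OF assms(1,2)])
  have Wu: "?W (coeff_vec e w j) \<in> l2" for j by (rule kapply_l2[OF W u])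
  have W_coeff_comb: "?W (coeff_comb e w F x) = (\<lambda>g. \<Sum>j\<in>F. x j * ?W (coeff_vec e w j) g)" for x
    unfolding coeff_comb_def by (rule kapply_comb[OF W assms(5) u])
  have "linner (?W (coeff_comb e w F c)) (?W (coeff_comb e w F d))
      = (\<Sum>j\<in>F. c j * linner (?W (coeff_vec e w j)) (?W (coeff_comb e w F d)))"
    unfolding W_coeff_comb[of c]
    by (rule linner_comb_left[where f="\<lambda>j. ?W (coeff_vec e w j)", OF assms(5) Wu])
      (simp add: W_coeff_comb[symmetric] kapply_l2[OF W] l2_coeff_comb assms)
  also have "\<dots> = (\<Sum>j\<in>F. c j * (\<Sum>i\<in>F. cnj (d i) * linner (?W (coeff_vec e w j)) (?W (coeff_vec e w i))))"
    unfolding W_coeff_comb[of d]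
    by (simp only: linner_comb_right[where f="\<lambda>j. ?W (coeff_vec e w j)", OF assms(5) Wu Wu])
  also have "\<dots> = (\<Sum>j\<in>F. \<Sum>i\<in>F. cnj (d i) * linner (?W (coeff_vec e w j)) (?W (coeff_vec e w i)) * c j)"
    by (simp add: sum_distrib_left ac_simps)
  also have "\<dots> = (\<Sum>i\<in>F. \<Sum>j\<in>F. cnj (d i) * linner (?W (coeff_vec e w j)) (?W (coeff_vec e w i)) * c j)"
    by (rule sum.swap)
  also have "\<dots> = (\<Sum>i\<in>F. \<Sum>j\<in>F. cnj (d i) * star (theta w w) e (kcomp A (kadj A)) (kcomp B (kadj B)) i j * c j)"
    using star_eq_linner[OF assms(3,4) u u] by simp
  finally show ?thesis ..
qed

lemma linner_infsum_right:
  assumes "x \<in> l2" "\<And>c. g c \<in> l2" "(\<lambda>c. lnorm (g c)) summable_on UNIV"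
  shows "linner x (\<lambda>p. \<Sum>\<^sub>\<infinity>c. g c p) = (\<Sum>\<^sub>\<infinity>c. linner x (g c))"
proof -
  define h where "h z = x (snd z) * cnj (g (fst z) (snd z))" for z
  have "(\<lambda>z. norm (h z)) summable_on UNIV \<times> UNIV"
  proof (rule summable_on_SigmaI)
    show "((\<lambda>p. norm (h (c, p))) has_sum (\<Sum>\<^sub>\<infinity>p. cmod (x p) * cmod (g c p))) UNIV" for c
      using l2_cauchy_schwarz_abs(1)[OF assms(1,2)] by (simp add: h_def norm_mult)
    show "(\<lambda>c. \<Sum>\<^sub>\<infinity>p. cmod (x p) * cmod (g c p)) summable_on UNIV"
      using assms l2_cauchy_schwarz_abs[OF assms(1,2)]
      by (intro summable_on_comparison_test[OF summable_on_cmult_right[OF assms(3)], of _ "lnorm x"])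
        (auto intro: infsum_nonneg)
  qed auto
  then have s: "h summable_on UNIV"
    using abs_summable_summable[of h UNIV] by simp
  have inner: "(\<Sum>\<^sub>\<infinity>p. h (c, p)) = linner x (g c)" for c
    by (simp add: h_def linner_def)
  have "linner x (\<lambda>p. \<Sum>\<^sub>\<infinity>c. g c p) = (\<Sum>\<^sub>\<infinity>p. \<Sum>\<^sub>\<infinity>c. h (c, p))"
    by (simp add: linner_def h_def flip: infsum_cnj infsum_cmult_right')
  also have "\<dots> = (\<Sum>\<^sub>\<infinity>c. linner x (g c))"
    using infsum_pair_iterated[OF s] by (simp add: inner)
  finally show ?thesis .
qed

text \<open>\<open>vec(BA\<^sup>#)\<close> is the sum over \<open>c\<close> of the tensor products of the \<open>c\<close>-th columns of \<open>A\<close>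
  and \<open>B\<close>, and the norms of these terms are summable by AM-GM.\<close>

lemma linner_kvec_eq_trace:
  assumes "hs A" "hs B" "U \<in> l2"
  shows "linner U (kvec (kcomp B (ksharp A))) = (\<Sum>\<^sub>\<infinity>c. kapply (kkron (kadj A) (kadj B)) U (c, c))"
proof -
  define g where "g c = (\<lambda>(a, b). A a c * B b c)" for c
  have g: "g c \<in> l2" "lnorm (g c) = lnorm (\<lambda>a. A a c) * lnorm (\<lambda>b. B b c)" for c
    unfolding g_def using hs_col_l2[OF assms(1)] hs_col_l2[OF assms(2)]
    by (simp_all add: l2_tensor lnorm2_tensor lnorm_eq_sqrt_lnorm2 real_sqrt_mult)
  have "(\<lambda>c. lnorm (g c)) summable_on UNIV"
  proof (rule summable_on_comparison_test)
    show "(\<lambda>c. (lnorm2 (\<lambda>a. A a c) + lnorm2 (\<lambda>b. B b c)) / 2) summable_on UNIV"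
      using has_sum_divide_const[OF has_sum_add[OF has_sum_col_lnorm2[OF assms(1)] has_sum_col_lnorm2[OF assms(2)]]]
      by (rule has_sum_imp_summable)
    show "lnorm (g c) \<le> (lnorm2 (\<lambda>a. A a c) + lnorm2 (\<lambda>b. B b c)) / 2" for c
    proof -
      have "lnorm (g c) = sqrt (lnorm2 (\<lambda>a. A a c) * lnorm2 (\<lambda>b. B b c))"
        using g(2)[of c] by (simp add: lnorm_eq_sqrt_lnorm2 real_sqrt_mult)
      also have "\<dots> \<le> (lnorm2 (\<lambda>a. A a c) + lnorm2 (\<lambda>b. B b c)) / 2"
        by (rule arith_geo_mean_sqrt) (simp_all add: lnorm2_nonneg)
      finally show ?thesis .
    qed
  qed (simp add: lnorm_nonneg)
  moreover have "kvec (kcomp B (ksharp A)) = (\<lambda>p. \<Sum>\<^sub>\<infinity>c. g c p)"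
    by (auto simp: kvec_def kcomp_def ksharp_def g_def mult.commute)
  moreover have "linner U (g c) = kapply (kkron (kadj A) (kadj B)) U (c, c)" for c
    by (simp add: linner_def kapply_def kkron_def kadj_def g_def case_prod_unfold ac_simps)
  ultimately show ?thesis using linner_infsum_right[OF assms(3) g(1)] by simp
qed

lemma sum_rho_eq_trace:
  assumes "onb e" "w \<in> l2" "hs A" "hs B" "finite F"
  shows "(\<Sum>j\<in>F. c j * cnj (rho e w A B j))
    = (\<Sum>\<^sub>\<infinity>x. kapply (kkron (kadj A) (kadj B)) (coeff_comb e w F c) (x, x))"
proof -
  have v: "kvec (kcomp B (ksharp A)) \<in> l2"
    using assms(3,4) by (simp add: l2_kvec_iff hs_kcomp hs_ksharp_iff)
  have "(\<Sum>j\<in>F. c j * cnj (rho e w A B j)) = linner (coeff_comb e w F c) (kvec (kcomp B (ksharp A)))"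
    unfolding coeff_comb_def rho_def
    using linner_comb_left[where f="coeff_vec e w", OF assms(5) coeff_vec_l2[OF assms(1,2)] v]
    by (simp add: linner_cnj[of _ "coeff_vec e w _"])
  also have "\<dots> = (\<Sum>\<^sub>\<infinity>x. kapply (kkron (kadj A) (kadj B)) (coeff_comb e w F c) (x, x))"
    by (rule linner_kvec_eq_trace[OF assms(3,4) l2_coeff_comb[OF assms(1,2,5)]])
  finally show ?thesis .
qed

section \<open>Bounding the trace by the ranks\<close>

lemma
  assumes "hs A" "hs B" "U \<in> l2"
  shows kapply_kkron_adj_row: "(\<lambda>c'. kapply (kkron (kadj A) (kadj B)) U (c, c'))
      = kapply (kadj B) (kapply (kunvec U) (\<lambda>a. cnj (A a c)))"
    and kapply_kkron_adj_col: "(\<lambda>c. kapply (kkron (kadj A) (kadj B)) U (c, c'))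
      = kapply (kadj A) (kapply (\<lambda>a b. U (a, b)) (\<lambda>b. cnj (B b c')))"
proof -
  have s: "(\<lambda>(a, b). cnj (A a c) * cnj (B b c') * U (a, b)) summable_on UNIV" for c c'
    using l2_mult_summable[OF l2_tensor[OF l2_cnj[OF hs_col_l2[OF assms(1)]] l2_cnj[OF hs_col_l2[OF assms(2)]]] assms(3)]
    by (simp add: case_prod_unfold)
  have entry: "kapply (kkron (kadj A) (kadj B)) U (c, c') = (\<Sum>\<^sub>\<infinity>(a, b). cnj (A a c) * cnj (B b c') * U (a, b))"
    for c c'
    by (simp add: kapply_def kkron_def kadj_def case_prod_unfold)
  show "(\<lambda>c'. kapply (kkron (kadj A) (kadj B)) U (c, c'))
      = kapply (kadj B) (kapply (kunvec U) (\<lambda>a. cnj (A a c)))"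
  proof
    fix c'
    have "kapply (kkron (kadj A) (kadj B)) U (c, c') = (\<Sum>\<^sub>\<infinity>b. \<Sum>\<^sub>\<infinity>a. cnj (A a c) * cnj (B b c') * U (a, b))"
      using entry infsum_pair_iterated(2)[OF s] by simp
    then show "kapply (kkron (kadj A) (kadj B)) U (c, c') = kapply (kadj B) (kapply (kunvec U) (\<lambda>a. cnj (A a c))) c'"
      by (simp add: kapply_def kadj_def kunvec_def ac_simps flip: infsum_cmult_right')
  qed
  show "(\<lambda>c. kapply (kkron (kadj A) (kadj B)) U (c, c'))
      = kapply (kadj A) (kapply (\<lambda>a b. U (a, b)) (\<lambda>b. cnj (B b c')))"
  proof
    fix c
    have "kapply (kkron (kadj A) (kadj B)) U (c, c') = (\<Sum>\<^sub>\<infinity>a. \<Sum>\<^sub>\<infinity>b. cnj (A a c) * cnj (B b c') * U (a, b))"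
      using entry infsum_pair_iterated(1)[OF s] by simp
    then show "kapply (kkron (kadj A) (kadj B)) U (c, c') = kapply (kadj A) (kapply (\<lambda>a b. U (a, b)) (\<lambda>b. cnj (B b c'))) c"
      by (simp add: kapply_def kadj_def ac_simps flip: infsum_cmult_right')
  qed
qed

lemma trace_sq_le_of_rows_in_fspan:
  fixes W :: "'c \<Rightarrow> 'c \<Rightarrow> complex"
  assumes "hs W" "finite G" "G \<subseteq> l2" "card G \<le> m" "\<And>c. W c \<in> fspan G"
  shows "(cmod (\<Sum>\<^sub>\<infinity>c. W c c))^2 \<le> m * hs_norm2 W"
  using trace_sq_le_card_hs_norm2[OF assms(1,2,3,5)] mult_right_mono[OF _ hs_norm2_nonneg[of W]] assms(4)
  by (meson of_nat_le_iff order_trans)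

lemma trace_sq_le_of_cols_in_fspan:
  fixes W :: "'c \<Rightarrow> 'c \<Rightarrow> complex"
  assumes "hs W" "finite G" "G \<subseteq> l2" "card G \<le> m" "\<And>c'. (\<lambda>c. W c c') \<in> fspan G"
  shows "(cmod (\<Sum>\<^sub>\<infinity>c. W c c))^2 \<le> m * hs_norm2 W"
  using trace_sq_le_of_rows_in_fspan[of "\<lambda>c' c. W c c'" G m] hs_transpose_iff[of W]
    hs_norm2_transpose[of W] assms
  by simp

text \<open>Each of the three ranks bounds the rank of the kernel \<open>(A\<^sup>* \<otimes> B\<^sup>*) U\<close>: its columns
  lie in the range of \<open>A\<^sup>*\<close>, and its rows lie in the range of \<open>B\<^sup>*\<close> and in the image under
  \<open>B\<^sup>*\<close> of the range of \<open>U\<close>, read as an operator.\<close>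

lemma trace_sq_le_rank_lnorm2:
  fixes A :: "'a \<Rightarrow> 'c \<Rightarrow> complex" and B :: "'b \<Rightarrow> 'c \<Rightarrow> complex"
  assumes A: "hs A" and B: "hs B" and U: "U \<in> l2"
    and rank: "krank (kcomp A (kadj A)) \<le> enat m \<or> krank (kcomp B (kadj B)) \<le> enat m
      \<or> krank (kunvec U) \<le> enat m"
  shows "(cmod (\<Sum>\<^sub>\<infinity>c. kapply (kkron (kadj A) (kadj B)) U (c, c)))^2
    \<le> m * lnorm2 (kapply (kkron (kadj A) (kadj B)) U)"
proof -
  define X where "X c c' = kapply (kkron (kadj A) (kadj B)) U (c, c')" for c c'
  have "kapply (kkron (kadj A) (kadj B)) U \<in> l2"
    using A B U by (simp add: kapply_l2 hs_kkron hs_kadj)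
  then have X: "hs X" "hs_norm2 X = lnorm2 (kapply (kkron (kadj A) (kadj B)) U)"
    by (simp_all add: X_def hs_iff_l2 hs_norm2_eq_lnorm2)
  have M: "hs (kunvec U)" "hs (\<lambda>a b. U (a, b))"
    using U by (simp add: hs_kunvec_iff, simp add: hs_iff_l2)
  have "(cmod (\<Sum>\<^sub>\<infinity>c. X c c))^2 \<le> m * hs_norm2 X"
    using rank
  proof (elim disjE)
    assume "krank (kcomp A (kadj A)) \<le> enat m"
    then obtain G where G: "finite G" "G \<subseteq> l2" "card G \<le> m" "\<forall>x\<in>l2. kapply (kadj A) x \<in> fspan G"
      using krank_gram_le_imp_kadj_range_fspan[OF A] by blast
    have "(\<lambda>c. X c c') \<in> fspan G" for c'
      unfolding X_def kapply_kkron_adj_col[OF A B U]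
      using G(4) kapply_l2[OF M(2)] l2_cnj[OF hs_col_l2[OF B]] by blast
    then show ?thesis by (rule trace_sq_le_of_cols_in_fspan[OF X(1) G(1-3)])
  next
    assume "krank (kcomp B (kadj B)) \<le> enat m"
    then obtain G where G: "finite G" "G \<subseteq> l2" "card G \<le> m" "\<forall>x\<in>l2. kapply (kadj B) x \<in> fspan G"
      using krank_gram_le_imp_kadj_range_fspan[OF B] by blast
    have "X c \<in> fspan G" for c
      unfolding X_def kapply_kkron_adj_row[OF A B U]
      using G(4) kapply_l2[OF M(1)] l2_cnj[OF hs_col_l2[OF A]] by blast
    then show ?thesis by (rule trace_sq_le_of_rows_in_fspan[OF X(1) G(1-3)])
  next
    assume "krank (kunvec U) \<le> enat m"
    then obtain S where S: "finite S" "S \<subseteq> l2" "card S \<le> m" "\<forall>x\<in>l2. kapply (kunvec U) x \<in> fspan S"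
      using krank_le_imp_range_fspan[OF M(1)] by blast
    have "X c \<in> fspan (kapply (kadj B) ` S)" for c
      unfolding X_def kapply_kkron_adj_row[OF A B U]
      using kapply_fspan[OF hs_kadj[OF B] S(1,2)] S(4) l2_cnj[OF hs_col_l2[OF A]] by blast
    moreover have "kapply (kadj B) ` S \<subseteq> l2" using S(2) kapply_l2[OF hs_kadj[OF B]] by blast
    moreover have "card (kapply (kadj B) ` S) \<le> m"
      using card_image_le[OF S(1), of "kapply (kadj B)"] S(3) by simp
    ultimately show ?thesis using trace_sq_le_of_rows_in_fspan[OF X(1)] S(1) by blast
  qed
  then show ?thesis by (simp add: X_def X(2))
qed

lemma bound_const_mult_trace_sq_le:
  assumes "onb e" "w \<in> l2" "hs A" "hs B" "finite F"
  shows "bound_const e w A B * (cmod (\<Sum>\<^sub>\<infinity>c. kapply (kkron (kadj A) (kadj B)) (coeff_comb e w F d) (c, c)))^2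
    \<le> lnorm2 (kapply (kkron (kadj A) (kadj B)) (coeff_comb e w F d))"
    (is "_ * ?t \<le> ?s")
proof (cases "min (krank (kcomp A (kadj A))) (min (krank (kcomp B (kadj B))) (rstar e w))")
  case (enat m)
  have "krank (kcomp A (kadj A)) \<le> enat m \<or> krank (kcomp B (kadj B)) \<le> enat m
      \<or> krank (kunvec (coeff_comb e w F d)) \<le> enat m"
    using enat krank_kunvec_coeff_comb_le[OF assms(1,2,5), of d] by (auto simp: min_def split: if_splits)
  then have "?t \<le> m * ?s"
    by (rule trace_sq_le_rank_lnorm2[OF assms(3,4) l2_coeff_comb[OF assms(1,2,5)]])
  \<comment> \<open>for \<open>m = 0\<close> the constant is the junk value \<open>1 / 0 = 0\<close>\<close>
  then show ?thesis
    using enat lnorm2_nonneg by (cases "m = 0") (auto simp: bound_const_def inv_enat_def field_simps)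
next
  case infinity
  then show ?thesis by (simp add: bound_const_def inv_enat_def lnorm2_nonneg)
qed

lemma qform_theta_coord: "qform (theta_coord r) F c = of_real ((cmod (\<Sum>j\<in>F. c j * cnj (r j)))^2)"
proof -
  define S where "S = (\<Sum>j\<in>F. c j * cnj (r j))"
  have "qform (theta_coord r) F c = (\<Sum>i\<in>F. cnj (c i) * r i) * (\<Sum>j\<in>F. cnj (r j) * c j)"
    unfolding qform_def theta_coord_def sum_product by (simp add: ac_simps)
  also have "\<dots> = S * cnj S" by (simp add: S_def mult.commute)
  also have "\<dots> = of_real ((cmod S)^2)" by (rule complex_norm_square[symmetric])
  finally show ?thesis unfolding S_def .
qed

lemma qform_diff_scaled:
  "qform (\<lambda>i j. M i j - of_real k * N i j) F c = qform M F c - of_real k * qform N F c"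
  unfolding qform_def
  by (simp add: right_diff_distrib left_diff_distrib sum_subtractf sum_distrib_left ac_simps)

lemma qform_star:
  assumes "onb e" "w \<in> l2" "hs A" "hs B" "finite F"
  shows "qform (star (theta w w) e (kcomp A (kadj A)) (kcomp B (kadj B))) F c
    = of_real (lnorm2 (kapply (kkron (kadj A) (kadj B)) (coeff_comb e w F c)))"
  unfolding qform_def star_quadratic_form[OF assms]
  using assms by (intro linner_self kapply_l2 l2_coeff_comb) (simp_all add: hs_kkron hs_kadj)

lemma qform_theta_coord_rho:
  assumes "onb e" "w \<in> l2" "hs A" "hs B" "finite F"
  shows "qform (theta_coord (rho e w A B)) F c
    = of_real ((cmod (\<Sum>\<^sub>\<infinity>x. kapply (kkron (kadj A) (kadj B)) (coeff_comb e w F c) (x, x)))^2)"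
  by (simp add: qform_theta_coord sum_rho_eq_trace[OF assms])

lemma star_ineq_bound_const:
  assumes "onb e" "w \<in> l2" "hs A" "hs B"
  shows "star_ineq e w A B (bound_const e w A B)"
  unfolding star_ineq_def opge_def
  using bound_const_mult_trace_sq_le[OF assms]
  by (simp add: qform_diff_scaled qform_star[OF assms] qform_theta_coord_rho[OF assms])

lemma opge_scaled_theta_coord:
  assumes "0 \<le> k"
  shows "opge (\<lambda>i j. of_real k * theta_coord r i j) (\<lambda>i j. 0)"
  unfolding opge_def
proof (intro allI impI)
  fix F :: "'a set" and c
  have "qform (\<lambda>i j. of_real k * theta_coord r i j - 0) F c = of_real k * qform (theta_coord r) F c"
    unfolding qform_def by (simp add: sum_distrib_left ac_simps)
  then show "Im (qform (\<lambda>i j. of_real k * theta_coord r i j - 0) F c) = 0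
      \<and> 0 \<le> Re (qform (\<lambda>i j. of_real k * theta_coord r i j - 0) F c)"
    using assms by (simp add: qform_theta_coord)
qed

lemma bound_const_nonneg: "0 \<le> bound_const e w A B"
  by (simp add: bound_const_def inv_enat_def split: enat.split)

lemma bounded_form_star:
  fixes e :: "'i \<Rightarrow> 'k \<Rightarrow> complex"
  assumes "onb e" "w \<in> l2" "hs A" "hs B"
  shows "bounded_form (star (theta w w) e (kcomp A (kadj A)) (kcomp B (kadj B)))"
  unfolding bounded_form_def
proof (intro exI allI impI)
  fix F :: "'i set" and c d :: "'i \<Rightarrow> complex" assume F: "finite F"
  define K where "K = sqrt (hs_norm2 A * hs_norm2 B * lnorm2 w)"
  let ?W = "\<lambda>x. kapply (kkron (kadj A) (kadj B)) (coeff_comb e w F x)"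
  have W: "hs (kkron (kadj A) (kadj B))" "hs_norm2 (kkron (kadj A) (kadj B)) = hs_norm2 A * hs_norm2 B"
    using assms(3,4) by (simp_all add: hs_kkron hs_norm2_kkron hs_kadj hs_norm2_kadj)
  have W_l2: "?W x \<in> l2" for x by (rule kapply_l2[OF W(1) l2_coeff_comb[OF assms(1,2) F]])
  have W_bound: "lnorm (?W x) \<le> K * sqrt (\<Sum>i\<in>F. (cmod (x i))^2)" for x
  proof -
    have "lnorm2 (?W x) \<le> hs_norm2 A * hs_norm2 B * lnorm2 (coeff_comb e w F x)"
      using lnorm2_kapply_le[OF W(1) l2_coeff_comb[OF assms(1,2) F]] W(2) by simp
    also have "\<dots> \<le> hs_norm2 A * hs_norm2 B * (lnorm2 w * (\<Sum>i\<in>F. (cmod (x i))^2))"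
      by (intro mult_left_mono lnorm2_coeff_comb_le[OF assms(1,2) F]) (simp add: hs_norm2_nonneg)
    finally show ?thesis
      by (simp add: K_def lnorm_eq_sqrt_lnorm2 ac_simps flip: real_sqrt_mult)
  qed
  have "lnorm (?W c) * lnorm (?W d)
      \<le> (K * sqrt (\<Sum>i\<in>F. (cmod (c i))^2)) * (K * sqrt (\<Sum>i\<in>F. (cmod (d i))^2))"
    by (rule mult_mono[OF W_bound W_bound])
      (simp_all add: lnorm_nonneg K_def hs_norm2_nonneg lnorm2_nonneg sum_nonneg)
  then have norms: "lnorm (?W c) * lnorm (?W d)
      \<le> K * K * sqrt (\<Sum>i\<in>F. (cmod (c i))^2) * sqrt (\<Sum>i\<in>F. (cmod (d i))^2)"
    by (simp add: ac_simps)
  show "cmod (\<Sum>i\<in>F. \<Sum>j\<in>F. cnj (d i) * star (theta w w) e (kcomp A (kadj A)) (kcomp B (kadj B)) i j * c j)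
      \<le> K * K * sqrt (\<Sum>i\<in>F. (cmod (c i))^2) * sqrt (\<Sum>i\<in>F. (cmod (d i))^2)"
    unfolding star_quadratic_form[OF assms F]
    using linner_cauchy_schwarz[OF W_l2 W_l2] norms by (rule order.trans)
qed

lemma
  assumes "onb e" "w \<in> l2" "hs A" "hs B"
  shows summable_rho: "(\<lambda>i. (cmod (rho e w A B i))^2) summable_on UNIV"
    and rho_norm_le: "sqrt (\<Sum>\<^sub>\<infinity>i. (cmod (rho e w A B i))^2)
      \<le> hs_norm A * hs_norm B * sqrt (hs_norm (theta w w))"
proof -
  let ?v = "kvec (kcomp B (ksharp A))"
  have v: "?v \<in> l2" "lnorm2 ?v \<le> hs_norm2 A * hs_norm2 B"
    using assms(3,4) hs_norm2_kcomp_le[of B "ksharp A"]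
    by (simp_all add: l2_kvec_iff lnorm2_kvec hs_kcomp hs_ksharp_iff hs_norm2_ksharp mult.commute)
  note bessel = bessel_inequality[OF v(1) coeff_vec_l2[OF assms(1,2)] lnorm2_nonneg,
      OF lnorm2_coeff_comb_le[OF assms(1,2), unfolded coeff_comb_def]]
  show "(\<lambda>i. (cmod (rho e w A B i))^2) summable_on UNIV"
    using bessel(1) by (simp add: rho_def)
  have "(\<Sum>\<^sub>\<infinity>i. (cmod (rho e w A B i))^2) \<le> lnorm2 w * (hs_norm2 A * hs_norm2 B)"
    using bessel(2) mult_left_mono[OF v(2) lnorm2_nonneg[of w]] by (simp add: rho_def)
  then have "sqrt (\<Sum>\<^sub>\<infinity>i. (cmod (rho e w A B i))^2) \<le> sqrt (hs_norm2 A * hs_norm2 B * lnorm2 w)"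
    by (simp add: ac_simps)
  then show "sqrt (\<Sum>\<^sub>\<infinity>i. (cmod (rho e w A B i))^2) \<le> hs_norm A * hs_norm B * sqrt (hs_norm (theta w w))"
    unfolding hs_norm_theta[OF assms(2)] by (simp add: hs_norm_eq_sqrt_hs_norm2 real_sqrt_mult)
qed

section \<open>Sharpness of the constant\<close>

definition kunit :: "'a \<Rightarrow> 'c \<Rightarrow> 'a \<Rightarrow> 'c \<Rightarrow> complex" where
  "kunit a c = (\<lambda>a' c'. if a' = a \<and> c' = c then 1 else 0)"

definition ldelta :: "'a \<Rightarrow> 'a \<Rightarrow> complex" where
  "ldelta a = (\<lambda>a'. if a' = a then 1 else 0)"

lemma ldelta_l2: "ldelta a \<in> l2"
  unfolding l2_def ldelta_def mem_Collect_eq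
  by (rule has_sum_imp_summable, rule has_sum_single_support[where a=a]) simp

lemma hs_kunit: "hs (kunit a c)"
  unfolding hs_def kunit_def
  by (rule has_sum_imp_summable, rule has_sum_single_support[where a="(a, c)"]) (auto split: if_splits)

lemma kunit_nonzero: "kunit a c \<noteq> (\<lambda>_ _. 0)"
  by (auto simp: kunit_def fun_eq_iff)

lemma kapply_kunit: "kapply (kunit a c) x = (\<lambda>a'. x c * ldelta a a')"
proof
  fix a'
  show "kapply (kunit a c) x a' = x c * ldelta a a'"
    unfolding kapply_def using has_sum_single_support[of c "\<lambda>c'. kunit a c a' c' * x c'"]
    by (auto simp: kunit_def ldelta_def infsumI)
qed

lemma kcomp_kunit_kadj: "kcomp (kunit a c) (kadj (kunit a c)) = kunit a a"
proof (intro ext)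
  fix a' a''
  show "kcomp (kunit a c) (kadj (kunit a c)) a' a'' = kunit a a a' a''"
    unfolding kcomp_def kadj_def
    using has_sum_single_support[of c "\<lambda>c'. kunit a c a' c' * cnj (kunit a c a'' c')"]
    by (auto simp: kunit_def infsumI)
qed

lemma krank_kunit: "krank (kunit a c) = enat 1"
proof (rule antisym)
  show "krank (kunit a c) \<le> enat 1"
    by (rule krank_le_one[where y="ldelta a"]) (auto simp: kapply_kunit intro: fspanI)
  show "enat 1 \<le> krank (kunit a c)"
    by (rule one_le_krank[OF ldelta_l2[of c]]) (auto simp: kapply_kunit ldelta_def fun_eq_iff)
qed

lemma kapply_kkron_adj_kunit:
  "kapply (kkron (kadj (kunit a c)) (kadj (kunit b c))) U = (\<lambda>g. if g = (c, c) then U (a, b) else 0)"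
proof
  fix g
  show "kapply (kkron (kadj (kunit a c)) (kadj (kunit b c))) U g = (if g = (c, c) then U (a, b) else 0)"
    unfolding kapply_def
    using has_sum_single_support[of "(a, b)" "\<lambda>p. kkron (kadj (kunit a c)) (kadj (kunit b c)) g p * U p"]
    by (auto simp: kkron_def kadj_def kunit_def infsumI case_prod_unfold prod_eq_iff)
qed

lemma kapply_kunvec_ldelta: "kapply (kunvec u) (ldelta a) = (\<lambda>b. u (a, b))"
proof
  fix b
  show "kapply (kunvec u) (ldelta a) b = u (a, b)"
    unfolding kapply_def using has_sum_single_support[of a "\<lambda>a'. kunvec u b a' * ldelta a a'"]
    by (auto simp: kunvec_def ldelta_def infsumI)
qed

lemma bound_const_kunit:
  assumes "onb e" "w \<in> l2" "coeff_vec e w i (a, b) \<noteq> 0"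
  shows "bound_const e w (kunit a c) (kunit b c) = 1"
proof -
  have "enat 1 \<le> krank (kunvec (coeff_vec e w i))"
    using assms(3) by (intro one_le_krank[OF ldelta_l2[of a]]) (auto simp: kapply_kunvec_ldelta fun_eq_iff)
  also have "\<dots> \<le> rstar e w"
    using krank_kunvec_coeff_comb_le[OF assms(1,2), of "{i}" "\<lambda>_. 1"] by (simp add: coeff_comb_def)
  finally show ?thesis
    by (simp add: bound_const_def kcomp_kunit_kadj krank_kunit inv_enat_def min_def)
qed

lemma not_star_ineq_kunit:
  assumes "onb e" "w \<in> l2" "coeff_vec e w i (a, b) \<noteq> 0" "1 < k"
  shows "\<not> star_ineq e w (kunit a c) (kunit b c) k"
proof
  assume ineq: "star_ineq e w (kunit a c) (kunit b c) k"
  define u where "u = coeff_vec e w i"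
  let ?W = "kapply (kkron (kadj (kunit a c)) (kadj (kunit b c))) u"
  define t where "t = (cmod (u (a, b)))^2"
  have AB: "hs (kunit a c)" "hs (kunit b c)" by (simp_all add: hs_kunit)
  have u: "coeff_comb e w {i} (\<lambda>_. 1) = u" by (simp add: coeff_comb_def u_def)
  have "lnorm2 ?W = t"
    unfolding lnorm2_def kapply_kkron_adj_kunit
    using has_sum_single_support[of "(c, c)" "\<lambda>g. (cmod (if g = (c, c) then u (a, b) else 0))^2"]
    by (simp add: t_def infsumI)
  moreover have "(\<Sum>\<^sub>\<infinity>x. ?W (x, x)) = u (a, b)"
    unfolding kapply_kkron_adj_kunit
    using has_sum_single_support[of c "\<lambda>x. if (x, x) = (c, c) then u (a, b) else 0"]
    by (simp add: infsumI)
  ultimately have "qform (\<lambda>i j. star (theta w w) e (kcomp (kunit a c) (kadj (kunit a c)))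
        (kcomp (kunit b c) (kadj (kunit b c))) i j
      - of_real k * theta_coord (rho e w (kunit a c) (kunit b c)) i j) {i} (\<lambda>_. 1) = of_real (t - k * t)"
    using qform_star[OF assms(1,2) AB, of "{i}" "\<lambda>_. 1"] qform_theta_coord_rho[OF assms(1,2) AB, of "{i}" "\<lambda>_. 1"]
    by (simp add: qform_diff_scaled u t_def)
  with ineq[unfolded star_ineq_def opge_def, rule_format, of "{i}" "\<lambda>_. 1"] have "k * t \<le> t"
    by simp
  moreover have "0 < t" using assms(3) by (simp add: t_def u_def)
  ultimately show False using assms(4) by simp
qed

lemma exists_sharp_kunit:
  fixes e :: "'i \<Rightarrow> 'k \<Rightarrow> complex" and w :: "'k \<times> ('a \<times> 'b) \<Rightarrow> complex"
  assumes "onb e" "w \<in> l2" "w \<noteq> (\<lambda>_. 0)"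
  shows "\<exists>(A :: 'a \<Rightarrow> 'c \<Rightarrow> complex) (B :: 'b \<Rightarrow> 'c \<Rightarrow> complex).
    hs A \<and> A \<noteq> (\<lambda>_ _. 0) \<and> hs B \<and> B \<noteq> (\<lambda>_ _. 0)
    \<and> (\<forall>k>bound_const e w A B. \<not> star_ineq e w A B k)"
proof -
  obtain k a b where "w (k, (a, b)) \<noteq> 0" using assms(3) by (auto simp: fun_eq_iff)
  then have "(\<lambda>k. w (k, (a, b))) \<noteq> (\<lambda>_. 0)" by (auto simp: fun_eq_iff)
  then obtain i where "linner (\<lambda>k. w (k, (a, b))) (e i) \<noteq> 0"
    using assms(1) l2_slice[OF assms(2)] unfolding onb_def by blast
  then have u: "coeff_vec e w i (a, b) \<noteq> 0"
    by (simp add: coeff_vec_def linner_def mult.commute)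
  show ?thesis
    using bound_const_kunit[OF assms(1,2) u, where c="undefined :: 'c"]
      not_star_ineq_kunit[OF assms(1,2) u, where c="undefined :: 'c"]
    by (intro exI[of _ "kunit a undefined"] exI[of _ "kunit b undefined"])
      (simp add: hs_kunit kunit_nonzero)
qed

theorem theorem5p5:
  fixes e :: "'i \<Rightarrow> ('k \<Rightarrow> complex)"
    and w :: "'k \<times> ('a \<times> 'b) \<Rightarrow> complex"
    and A :: "'a \<Rightarrow> 'c \<Rightarrow> complex"
    and B :: "'b \<Rightarrow> 'c \<Rightarrow> complex"
  assumes "onb e"
    and "w \<in> l2" and "w \<noteq> (\<lambda>_. 0)"
    and "hs A" and "A \<noteq> (\<lambda>_ _. 0)"
    and "hs B" and "B \<noteq> (\<lambda>_ _. 0)"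
  shows "(\<lambda>i. (cmod (rho e w A B i))^2) summable_on UNIV
    \<and> sqrt (infsum (\<lambda>i. (cmod (rho e w A B i))^2) UNIV)
        \<le> hs_norm A * hs_norm B * sqrt (hs_norm (theta w w))
    \<and> bounded_form (star (theta w w) e (kcomp A (kadj A)) (kcomp B (kadj B)))
    \<and> star_ineq e w A B (bound_const e w A B)
    \<and> opge (\<lambda>i j. complex_of_real (bound_const e w A B) * theta_coord (rho e w A B) i j) (\<lambda>i j. 0)
    \<and> (\<exists>(A' :: 'a \<Rightarrow> 'c \<Rightarrow> complex) (B' :: 'b \<Rightarrow> 'c \<Rightarrow> complex).
         hs A' \<and> A' \<noteq> (\<lambda>_ _. 0) \<and> hs B' \<and> B' \<noteq> (\<lambda>_ _. 0)
         \<and> (\<forall>c::real. c > bound_const e w A' B' \<longrightarrow> \<not> star_ineq e w A' B' c))"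
  using summable_rho[OF assms(1,2,4,6)] rho_norm_le[OF assms(1,2,4,6)]
    bounded_form_star[OF assms(1,2,4,6)] star_ineq_bound_const[OF assms(1,2,4,6)]
    opge_scaled_theta_coord[OF bound_const_nonneg] exists_sharp_kunit[OF assms(1-3)]
  by blast

end
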